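(* Let $q \geq 7$ be a prime power and let $\mathcal{X}$ be a plane curve of degree $q-1$ defined over $\mathbb{F}_q$ without $\mathbb{F}_q$-linear components with $\mathrm{N}_q(\mathcal{X}) = (q-1)^2$. If there is an $\mathbb{F}_q$-line $l^1_\infty$ with $l^1_\infty(\mathbb{F}_q) \subseteq Z(\mathcal{X})$, then $a_0 = 3$.
   Context: $\mathcal{X}(\mathbb{F}_q)=\mathcal{X}\cap\mathbb{P}^2(\mathbb{F}_q)$, $\mathrm{N}_q(\mathcal{X})=\#\mathcal{X}(\mathbb{F}_q)$; "without $\mathbb{F}_q$-linear components" means no line defined over $\mathbb{F}_q$ is a component. $Z(\mathcal{X}) := \mathbb{P}^2(\mathbb{F}_q)\setminus\mathcal{X}(\mathbb{F}_q)$. $a_0$ is the number of $\mathbb{F}_q$-lines containing no point of $\mathcal{X}(\mathbb{F}_q)$. *)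

theory Defs
  imports Main
begin

(* Homogeneous polynomials in X,Y,Z over a field, as coefficient functions on exponent triples *)
type_synonym 'a tpoly = "nat \<times> nat \<times> nat \<Rightarrow> 'a"

definition homog :: "nat \<Rightarrow> ('a::zero) tpoly \<Rightarrow> bool" where
  "homog d F \<longleftrightarrow> (\<forall>i j k. F (i,j,k) \<noteq> 0 \<longrightarrow> i + j + k = d) \<and> (\<exists>m. F m \<noteq> 0)"

definition heval :: "nat \<Rightarrow> ('a::comm_ring_1) tpoly \<Rightarrow> 'a \<times> 'a \<times> 'a \<Rightarrow> 'a" where
  "heval d F v = (case v of (x,y,z) \<Rightarrow>
     (\<Sum>i\<le>d. \<Sum>j\<le>d-i. F (i,j,d-i-j) * x^i * y^j * z^(d-i-j)))"

(* product of the linear form aX+bY+cZ with G *)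
definition lin_mult :: "('a::comm_ring_1) \<times> 'a \<times> 'a \<Rightarrow> 'a tpoly \<Rightarrow> 'a tpoly" where
  "lin_mult l G = (case l of (a,b,c) \<Rightarrow> (\<lambda>(i,j,k).
      (if i > 0 then a * G (i-1,j,k) else 0) + (if j > 0 then b * G (i,j-1,k) else 0)
    + (if k > 0 then c * G (i,j,k-1) else 0)))"

definition no_linear_component :: "nat \<Rightarrow> ('a::comm_ring_1) tpoly \<Rightarrow> bool" where
  "no_linear_component d F \<longleftrightarrow>
     \<not> (\<exists>l G. l \<noteq> (0,0,0) \<and> homog (d-1) G \<and> F = lin_mult l G)"

definition proj_class :: "('a::field) \<times> 'a \<times> 'a \<Rightarrow> ('a \<times> 'a \<times> 'a) set" where
  "proj_class v = (case v of (x,y,z) \<Rightarrow> {(c*x, c*y, c*z) | c. c \<noteq> 0})"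

definition proj_pts :: "(('a::field) \<times> 'a \<times> 'a) set set" where
  "proj_pts = {proj_class v | v. v \<noteq> (0,0,0)}"

definition curve_pts :: "nat \<Rightarrow> ('a::field) tpoly \<Rightarrow> ('a \<times> 'a \<times> 'a) set set" where
  "curve_pts d F = {P \<in> proj_pts. \<forall>v\<in>P. heval d F v = 0}"

definition Zset :: "nat \<Rightarrow> ('a::field) tpoly \<Rightarrow> ('a \<times> 'a \<times> 'a) set set" where
  "Zset d F = proj_pts - curve_pts d F"

definition line_pts :: "('a::field) \<times> 'a \<times> 'a \<Rightarrow> ('a \<times> 'a \<times> 'a) set set" where
  "line_pts l = (case l of (a,b,c) \<Rightarrow>
     {P \<in> proj_pts. \<forall>(x,y,z)\<in>P. a*x + b*y + c*z = 0})"

(* the F_q-lines, each identified with its set of F_q-points *)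
definition fq_lines :: "(('a::field) \<times> 'a \<times> 'a) set set set" where
  "fq_lines = {line_pts l | l. l \<noteq> (0,0,0)}"

definition a0 :: "nat \<Rightarrow> ('a::field) tpoly \<Rightarrow> nat" where
  "a0 d F = card {L \<in> fq_lines. L \<inter> curve_pts d F = {}}"

end

(*
  Send a line l missing the curve to infinity.  In the affine chart the curve equation becomes a
  function f on F_q^2 whose zeros are the (q - 1)^2 points of the curve, so f has 2q - 1 nonzeros.
  Chevalley's lemma gives two facts about f: its moments against products of at most q - 2 affine
  functions vanish, and its sum along any line is minus the (nonzero) value of F at the point at
  infinity of that line.  Counting the q + 1 lines through a zero of f, some parallel class contains
  at least three lines meeting the support of f exactly once.  Along the lines of that class the
  low moments of f are polynomials of low degree, and interpolating through the thin lines shows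
  that all lines but one are thin and the remaining one is full: the support of f is the union of
  two non-parallel lines.  So the lines missing the curve are l and these two lines.
*)

theory Submission
  imports Defs "HOL-Computational_Algebra.Polynomial" "HOL-Library.Cardinality"
begin

section \<open>Power sums over a finite field\<close>

lemma card_UNIV_ge_2: "CARD('a::{finite,zero_neq_one}) \<ge> 2"
proof -
  have "card {0::'a, 1} \<le> CARD('a)" by (intro card_mono) auto
  then show ?thesis by simp
qed

lemma of_nat_card_UNIV_eq_0: "of_nat (CARD('a::{finite,field})) = (0::'a)"
proof -
  have "(\<Sum>y\<in>UNIV. y) = (\<Sum>y\<in>UNIV. y + (1::'a))"
    by (rule sum.reindex_bij_witness[of _ "\<lambda>y. y + 1" "\<lambda>y. y - 1"]) auto
  then show ?thesis by (simp add: sum.distrib)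
qed

lemma power_card_UNIV_minus_1:
  fixes x :: "'a::{finite,field}"
  assumes "x \<noteq> 0"
  shows "x ^ (CARD('a) - 1) = 1"
proof -
  let ?U = "UNIV - {0::'a}"
  have "(\<Prod>y\<in>?U. y) = (\<Prod>y\<in>?U. x * y)"
    using assms by (intro prod.reindex_bij_witness[of _ "\<lambda>y. x * y" "\<lambda>y. y / x"]) auto
  also have "\<dots> = x ^ card ?U * (\<Prod>y\<in>?U. y)" by (simp add: prod.distrib)
  finally have "(\<Prod>y\<in>?U. y) * (x ^ card ?U - 1) = 0" by (simp add: algebra_simps)
  moreover have "(\<Prod>y\<in>?U. y) \<noteq> 0" by simp
  ultimately show ?thesis by (simp add: card_Diff_subset)
qed

lemma power_card_UNIV: "(x::'a::{finite,field}) ^ CARD('a) = x"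
proof (cases "x = 0")
  case False
  have "CARD('a) = Suc (CARD('a) - 1)"
    using card_UNIV_ge_2[where 'a='a] by simp
  then show ?thesis by (metis False power_Suc power_card_UNIV_minus_1 mult_1_right)
qed (use card_UNIV_ge_2[where 'a='a] in simp)

lemma sum_UNIV_power_eq_0:
  assumes "i < CARD('a::{finite,field}) - 1"
  shows "(\<Sum>x\<in>UNIV. (x::'a) ^ i) = 0"
proof (cases "i = 0")
  case True
  then show ?thesis by (simp add: of_nat_card_UNIV_eq_0)
next
  case False
  \<comment> \<open>\<open>X\<^sup>i - 1\<close> has fewer than \<open>q - 1\<close> roots, so some unit \<open>c\<close> has \<open>c\<^sup>i \<noteq> 1\<close>.\<close>
  obtain c :: 'a where c: "c \<noteq> 0" "c ^ i \<noteq> 1"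
  proof (rule ccontr)
    assume "\<not> thesis"
    let ?p = "monom (1::'a) i - 1"
    from \<open>\<not> thesis\<close> that have roots: "UNIV - {0} \<subseteq> {x. poly ?p x = 0}"
      by (auto simp: poly_monom)
    have "coeff ?p i = 1" using False by simp
    then have "?p \<noteq> 0" by (metis coeff_0 zero_neq_one)
    then have "card {x. poly ?p x = 0} \<le> degree ?p" by (rule card_poly_roots_bound)
    also have "degree ?p \<le> i" by (intro degree_diff_le) (auto simp: degree_monom_le)
    finally have "card {x. poly ?p x = 0} \<le> i" .
    moreover have "card (UNIV - {0::'a}) \<le> card {x. poly ?p x = 0}"
      using roots by (intro card_mono) auto
    ultimately show False using assms by (simp add: card_Diff_subset)
  qed
  have "(\<Sum>x\<in>UNIV. (x::'a) ^ i) = (\<Sum>x\<in>UNIV. (c * x) ^ i)"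
    using c by (intro sum.reindex_bij_witness[of _ "\<lambda>y. c * y" "\<lambda>y. y / c"]) auto
  also have "\<dots> = c ^ i * (\<Sum>x\<in>UNIV. x ^ i)" by (simp add: power_mult_distrib sum_distrib_left)
  finally have "(c ^ i - 1) * (\<Sum>x\<in>UNIV. (x::'a) ^ i) = 0" by (simp add: algebra_simps)
  with c show ?thesis by simp
qed

lemma sum_UNIV_minus_0_const: "(\<Sum>u\<in>UNIV - {0::'a::{finite,field}}. X) = - (X::'a)"
proof -
  have "(\<Sum>u\<in>UNIV - {0::'a}. X) = (of_nat (CARD('a)) - 1) * X"
    using card_UNIV_ge_2[where 'a='a] by (simp add: card_Diff_subset of_nat_diff)
  then show ?thesis by (simp add: of_nat_card_UNIV_eq_0)
qed

lemma sum_UNIV_power_card_minus_1: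
  "(\<Sum>x\<in>UNIV. (x::'a::{finite,field}) ^ (CARD('a) - 1)) = -1"
proof -
  let ?e = "CARD('a) - 1"
  have "(\<Sum>x\<in>UNIV. (x::'a) ^ ?e) = (\<Sum>x\<in>UNIV - {0}. x ^ ?e)"
    by (rule sum.mono_neutral_right) (use card_UNIV_ge_2[where 'a='a] in auto)
  also have "\<dots> = (\<Sum>x\<in>UNIV - {0::'a}. 1)"
    by (intro sum.cong refl power_card_UNIV_minus_1) simp
  finally show ?thesis by (simp only: sum_UNIV_minus_0_const)
qed

lemma sum_power_mult_power_card_UNIV:
  fixes c a :: "'a::{finite,field}"
  shows "(\<Sum>e<CARD('a). c ^ e * a ^ (CARD('a) - 1 - e))
           = (if c = a then 0 else 1)"
proof -
  let ?q = "CARD('a)"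
  show ?thesis
  proof (cases "c = a")
    case True
    have "(\<Sum>e<?q. c ^ e * a ^ (?q - 1 - e)) = (\<Sum>e<?q. a ^ (?q - 1))"
      using True by (intro sum.cong refl) (simp flip: power_add)
    then show ?thesis using True by (simp add: of_nat_card_UNIV_eq_0)
  next
    case False
    have "c - a = c ^ ?q - a ^ ?q" by (simp add: power_card_UNIV)
    also have "\<dots> = (c - a) * (\<Sum>e<?q. c ^ e * a ^ (?q - 1 - e))"
      by (simp add: power_diff_sumr2 mult.commute)
    finally have "(c - a) * ((\<Sum>e<?q. c ^ e * a ^ (?q - 1 - e)) - 1) = 0"
      by (simp add: algebra_simps)
    with False show ?thesis by simp
  qed
qed

section \<open>Polynomial functions on \<open>F\<^sub>q\<^sup>3\<close>\<close>

type_synonym 'a vec3 = "'a \<times> 'a \<times> 'a"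

definition dot3 :: "'a::comm_ring_1 vec3 \<Rightarrow> 'a vec3 \<Rightarrow> 'a" where
  "dot3 l v = (case l of (a, b, c) \<Rightarrow> case v of (x, y, z) \<Rightarrow> a * x + b * y + c * z)"

lemma dot3_simp [simp]: "dot3 (a, b, c) (x, y, z) = a * x + b * y + c * z"
  by (simp add: dot3_def)

inductive_set polyfun3 :: "nat \<Rightarrow> ('a::comm_ring_1 vec3 \<Rightarrow> 'a) set" for n where
  monomial: "i + j + k \<le> n \<Longrightarrow> (\<lambda>(x, y, z). x ^ i * y ^ j * z ^ k) \<in> polyfun3 n"
| add: "f \<in> polyfun3 n \<Longrightarrow> g \<in> polyfun3 n \<Longrightarrow> (\<lambda>v. f v + g v) \<in> polyfun3 n"
| scale: "f \<in> polyfun3 n \<Longrightarrow> (\<lambda>v. c * f v) \<in> polyfun3 n"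

lemma polyfun3_mono: "f \<in> polyfun3 n \<Longrightarrow> n \<le> m \<Longrightarrow> f \<in> polyfun3 m"
  by (induction rule: polyfun3.induct) (auto intro: polyfun3.intros)

lemma polyfun3_const: "(\<lambda>v. c) \<in> polyfun3 n"
  using polyfun3.scale[OF polyfun3.monomial[of 0 0 0 n], of c] by (simp add: case_prod_beta)

lemma polyfun3_sum:
  "finite A \<Longrightarrow> (\<And>a. a \<in> A \<Longrightarrow> g a \<in> polyfun3 n) \<Longrightarrow> (\<lambda>v. \<Sum>a\<in>A. g a v) \<in> polyfun3 n"
  by (induction A rule: finite_induct) (auto intro: polyfun3.add polyfun3_const)

lemma polyfun3_dot3_mult:
  assumes "f \<in> polyfun3 n"
  shows "(\<lambda>v. dot3 l v * f v) \<in> polyfun3 (Suc n)"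
  using assms
proof (induction rule: polyfun3.induct)
  case (monomial i j k)
  obtain a b c where l: "l = (a, b, c)" by (cases l)
  have "(\<lambda>v. a * (\<lambda>(x, y, z). x ^ Suc i * y ^ j * z ^ k) v
           + b * (\<lambda>(x, y, z). x ^ i * y ^ Suc j * z ^ k) v
           + c * (\<lambda>(x, y, z). x ^ i * y ^ j * z ^ Suc k) v) \<in> polyfun3 (Suc n)"
    using monomial by (intro polyfun3.add polyfun3.scale polyfun3.monomial) auto
  moreover have "(\<lambda>v. a * (\<lambda>(x, y, z). x ^ Suc i * y ^ j * z ^ k) v
           + b * (\<lambda>(x, y, z). x ^ i * y ^ Suc j * z ^ k) v
           + c * (\<lambda>(x, y, z). x ^ i * y ^ j * z ^ Suc k) v)
        = (\<lambda>v. dot3 l v * (\<lambda>(x, y, z). x ^ i * y ^ j * z ^ k) v)"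
    by (auto simp: fun_eq_iff l algebra_simps)
  ultimately show ?case by simp
next
  case (add f g)
  then show ?case by (simp add: distrib_left polyfun3.add)
next
  case (scale f c)
  then show ?case by (simp add: mult.left_commute polyfun3.scale)
qed

lemma polyfun3_dot3_power_mult:
  "g \<in> polyfun3 n \<Longrightarrow> (\<lambda>v. dot3 l v ^ i * g v) \<in> polyfun3 (n + i)"
  by (induction i) (auto simp: mult.assoc dest: polyfun3_dot3_mult[where l=l])

lemma polyfun3_compose_linear:
  assumes "f \<in> polyfun3 n"
  shows "(\<lambda>v. f (dot3 l1 v, dot3 l2 v, dot3 l3 v)) \<in> polyfun3 n"
  using assms
proof (induction rule: polyfun3.induct)
  case (monomial i j k)
  have "(\<lambda>v. dot3 l1 v ^ i * (dot3 l2 v ^ j * (dot3 l3 v ^ k * 1))) \<in> polyfun3 (0 + k + j + i)"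
    by (intro polyfun3_dot3_power_mult polyfun3_const)
  then have "(\<lambda>v. dot3 l1 v ^ i * (dot3 l2 v ^ j * (dot3 l3 v ^ k * 1))) \<in> polyfun3 n"
    by (rule polyfun3_mono) (use monomial in simp)
  then show ?case by (simp add: mult.assoc)
qed (auto intro: polyfun3.intros)

lemma sum_UNIV_vec3:
  "(\<Sum>v\<in>UNIV. h v) = (\<Sum>x\<in>UNIV. \<Sum>y\<in>UNIV. \<Sum>z\<in>UNIV. h (x, y, z))"
  for h :: "'a::finite vec3 \<Rightarrow> 'b::comm_monoid_add"
  by (simp add: sum.cartesian_product flip: UNIV_Times_UNIV)

text \<open>Chevalley's lemma: a monomial of degree below \<open>3(q - 1)\<close> has some exponent below \<open>q - 1\<close>.\<close>

lemma sum_polyfun3_eq_0: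
  fixes f :: "'a::{finite,field} vec3 \<Rightarrow> 'a"
  assumes "f \<in> polyfun3 n" "n < 3 * (CARD('a) - 1)"
  shows "(\<Sum>v\<in>UNIV. f v) = 0"
  using assms
proof (induction rule: polyfun3.induct)
  case (monomial i j k)
  have "(\<Sum>v\<in>UNIV. (\<lambda>(x, y, z). (x::'a) ^ i * y ^ j * z ^ k) v)
          = (\<Sum>x\<in>UNIV. x ^ i * (\<Sum>y\<in>UNIV. y ^ j * (\<Sum>z\<in>UNIV. z ^ k)))"
    by (simp add: sum_UNIV_vec3 sum_distrib_left mult.assoc)
  also have "\<dots> = (\<Sum>x\<in>UNIV. x ^ i) * ((\<Sum>y\<in>UNIV. y ^ j) * (\<Sum>z\<in>UNIV. z ^ k))"
    by (simp add: sum_distrib_right)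
  moreover have "i < CARD('a) - 1 \<or> j < CARD('a) - 1
                   \<or> k < CARD('a) - 1"
    using monomial by linarith
  ultimately show ?case by (auto simp: sum_UNIV_power_eq_0)
next
  case (add f g)
  then show ?case by (simp add: sum.distrib)
next
  case (scale f c)
  then show ?case by (simp flip: sum_distrib_left)
qed

lemma heval_in_polyfun3: "heval d F \<in> polyfun3 d"
proof -
  have "(\<lambda>v. \<Sum>i\<le>d. \<Sum>j\<le>d - i. F (i, j, d - i - j) * (\<lambda>(x, y, z). x ^ i * y ^ j * z ^ (d - i - j)) v)
          \<in> polyfun3 d"
    by (auto intro!: polyfun3_sum polyfun3.scale polyfun3.monomial)
  moreover have "(\<lambda>v. \<Sum>i\<le>d. \<Sum>j\<le>d - i.
                      F (i, j, d - i - j) * (\<lambda>(x, y, z). x ^ i * y ^ j * z ^ (d - i - j)) v)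
                   = heval d F"
    by (auto simp: fun_eq_iff heval_def algebra_simps)
  ultimately show ?thesis by simp
qed

definition scale3 :: "'a::comm_ring_1 \<Rightarrow> 'a vec3 \<Rightarrow> 'a vec3" where
  "scale3 c v = (case v of (x, y, z) \<Rightarrow> (c * x, c * y, c * z))"

lemma scale3_simp [simp]: "scale3 c (x, y, z) = (c * x, c * y, c * z)"
  by (simp add: scale3_def)

lemma heval_scale3: "heval d F (scale3 c v) = c ^ d * heval d F v"
proof -
  obtain x y z where v: "v = (x, y, z)" by (cases v)
  have "F (i, j, d - i - j) * (c * x) ^ i * (c * y) ^ j * (c * z) ^ (d - i - j)
          = c ^ d * (F (i, j, d - i - j) * x ^ i * y ^ j * z ^ (d - i - j))"
    if "i \<le> d" "j \<le> d - i" for i j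
  proof -
    from that have "c ^ d = c ^ i * c ^ j * c ^ (d - i - j)" by (simp flip: power_add)
    then show ?thesis by (simp add: power_mult_distrib algebra_simps)
  qed
  then show ?thesis by (simp add: v heval_def sum_distrib_left)
qed

section \<open>Interpolation from vanishing moments\<close>

lemma vanishing_moments_imp_poly:
  fixes M :: "'a::{finite,field} \<Rightarrow> 'a"
  assumes j: "j < CARD('a)"
    and moments: "\<And>i. i + j \<le> CARD('a) - 2 \<Longrightarrow> (\<Sum>c\<in>UNIV. c ^ i * M c) = 0"
  shows "\<exists>P. degree P \<le> j \<and> (\<forall>c. M c = poly P c)"
proof -
  let ?q = "CARD('a)"
  define B where "B e = (\<Sum>a\<in>UNIV. M a * a ^ (?q - 1 - e))" for e
  have B0: "B e = 0" if "j < e" "e < ?q" for e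
    using moments[of "?q - 1 - e"] that by (simp add: B_def mult.commute)
  define P where "P = monom (\<Sum>a\<in>UNIV. M a) 0 - (\<Sum>e\<le>j. monom (B e) e)"
  have "degree P \<le> j"
    unfolding P_def by (intro degree_diff_le degree_sum_le order.trans[OF degree_monom_le]) auto
  moreover have "M c = poly P c" for c
  proof -
    \<comment> \<open>Lagrange interpolation: \<open>1 - (c\<^sup>q - a\<^sup>q)/(c - a)\<close> is the indicator of \<open>c = a\<close>.\<close>
    have "M c = (\<Sum>a\<in>UNIV. if c = a then M a else 0)" by simp
    also have "\<dots> = (\<Sum>a\<in>UNIV. M a * (if c = a then 1 else 0))" by (intro sum.cong) auto
    also have "\<dots> = (\<Sum>a\<in>UNIV. M a * (1 - (\<Sum>e<?q. c ^ e * a ^ (?q - 1 - e))))"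
      by (rule sum.cong[OF refl]) (subst sum_power_mult_power_card_UNIV, simp)
    also have "\<dots> = (\<Sum>a\<in>UNIV. M a) - (\<Sum>e<?q. c ^ e * B e)"
      by (simp add: B_def algebra_simps sum_subtractf sum_distrib_left sum_distrib_right)
         (rule sum.swap)
    also have "(\<Sum>e<?q. c ^ e * B e) = (\<Sum>e\<le>j. c ^ e * B e)"
      using j B0 by (intro sum.mono_neutral_right) auto
    also have "(\<Sum>a\<in>UNIV. M a) - (\<Sum>e\<le>j. c ^ e * B e) = poly P c"
      by (simp add: P_def poly_sum poly_monom mult.commute)
    finally show ?thesis .
  qed
  ultimately show ?thesis by blast
qed

section \<open>Weights on the affine plane with vanishing low moments\<close>

definition aff_fun :: "'a::comm_ring_1 vec3 \<Rightarrow> 'a \<times> 'a \<Rightarrow> 'a" where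
  "aff_fun a p = dot3 a (fst p, snd p, 1)"

lemma aff_fun_simp [simp]: "aff_fun (a1, a2, a3) (s, t) = a1 * s + a2 * t + a3"
  by (simp add: aff_fun_def)

lemma card_eq_sum_card_fibers:
  fixes g :: "'b \<Rightarrow> 'c::finite"
  assumes "finite S"
  shows "card S = (\<Sum>y\<in>UNIV. card {x\<in>S. g x = y})"
  using sum.group[of S UNIV g "\<lambda>_. 1 :: nat"] assms by (simp add: conj_commute)

lemma sum_UNIV_prod: "(\<Sum>p\<in>UNIV. h p) = (\<Sum>a\<in>UNIV. \<Sum>c\<in>UNIV. h (a, c))"
  for h :: "'a::finite \<times> 'b::finite \<Rightarrow> 'c::comm_monoid_add"
  by (simp add: sum.cartesian_product)

definition linmap2 :: "'a::comm_ring_1 \<Rightarrow> 'a \<Rightarrow> 'a \<Rightarrow> 'a \<Rightarrow> 'a \<times> 'a \<Rightarrow> 'a \<times> 'a" where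
  "linmap2 \<alpha> \<beta> \<gamma> \<delta> p = (\<alpha> * fst p + \<beta> * snd p, \<gamma> * fst p + \<delta> * snd p)"

lemma bij_linmap2:
  fixes \<alpha> \<beta> \<gamma> \<delta> :: "'a::{finite,field}"
  assumes "\<alpha> * \<delta> - \<beta> * \<gamma> \<noteq> 0"
  shows "bij (linmap2 \<alpha> \<beta> \<gamma> \<delta>)"
proof -
  let ?D = "\<alpha> * \<delta> - \<beta> * \<gamma>"
  have "(\<lambda>p. ((\<delta> * fst p - \<beta> * snd p) / ?D, (\<alpha> * snd p - \<gamma> * fst p) / ?D)) (linmap2 \<alpha> \<beta> \<gamma> \<delta> p) = p"
    for p using assms by (simp add: linmap2_def prod_eq_iff field_simps)
  then have "inj (linmap2 \<alpha> \<beta> \<gamma> \<delta>)" by (metis injI)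
  then show ?thesis using finite_UNIV_inj_surj[of "linmap2 \<alpha> \<beta> \<gamma> \<delta>"] by (simp add: bij_def)
qed

lemma aff_fun_linmap2_pullback:
  fixes \<alpha> \<beta> \<gamma> \<delta> :: "'a::field"
  assumes "\<alpha> * \<delta> - \<beta> * \<gamma> \<noteq> 0"
  shows "\<exists>a'. \<forall>p. aff_fun a' (linmap2 \<alpha> \<beta> \<gamma> \<delta> p) = aff_fun a p"
proof -
  let ?D = "\<alpha> * \<delta> - \<beta> * \<gamma>"
  obtain a1 a2 a3 where a: "a = (a1, a2, a3)" by (cases a)
  have "aff_fun ((a1 * \<delta> - a2 * \<gamma>) / ?D, (a2 * \<alpha> - a1 * \<beta>) / ?D, a3) (s, t)
          = ((a1 * \<delta> - a2 * \<gamma>) * s + (a2 * \<alpha> - a1 * \<beta>) * t) / ?D + a3" for s t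
    by (simp add: add_divide_distrib)
  moreover have "(a1 * \<delta> - a2 * \<gamma>) * (\<alpha> * s + \<beta> * t) + (a2 * \<alpha> - a1 * \<beta>) * (\<gamma> * s + \<delta> * t)
                   = (a1 * s + a2 * t) * ?D" for s t
    by (simp add: algebra_simps)
  ultimately have "aff_fun ((a1 * \<delta> - a2 * \<gamma>) / ?D, (a2 * \<alpha> - a1 * \<beta>) / ?D, a3) (linmap2 \<alpha> \<beta> \<gamma> \<delta> p)
                     = aff_fun a p" for p
    using assms by (simp add: a linmap2_def aff_fun_def)
  then show ?thesis by blast
qed

text \<open>The hypotheses are those satisfied by the curve equation in an affine chart whose line at
  infinity misses the curve (\<open>plane_weight_F_aff\<close> below).\<close>

locale plane_weight =
  fixes f :: "'a::{finite,field} \<times> 'a \<Rightarrow> 'a"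
  assumes moments_vanish: "\<And>i j a b. i + j \<le> CARD('a) - 2 \<Longrightarrow>
      (\<Sum>p\<in>UNIV. f p * aff_fun a p ^ i * aff_fun b p ^ j) = 0"
    and line_sum_nonzero: "\<And>d1 d2 s0 t0. (d1, d2) \<noteq> (0, 0) \<Longrightarrow>
      (\<Sum>t\<in>UNIV. f (s0 + t * d1, t0 + t * d2)) \<noteq> 0"
    and card_support: "card {p. f p \<noteq> 0} = 2 * CARD('a) - 1"
    and card_ge_7: "CARD('a) \<ge> 7"
begin

definition row :: "'a \<Rightarrow> 'a set" where
  "row c = {a. f (a, c) \<noteq> 0}"

definition row_moment :: "nat \<Rightarrow> 'a \<Rightarrow> 'a" where
  "row_moment j c = (\<Sum>a\<in>UNIV. f (a, c) * a ^ j)"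

lemma row_moment_eq_sum_row: "row_moment j c = (\<Sum>a\<in>row c. f (a, c) * a ^ j)"
  unfolding row_moment_def row_def by (intro sum.mono_neutral_right) auto

lemma sum_power_row_moment_eq_0:
  assumes "i + j \<le> CARD('a) - 2"
  shows "(\<Sum>c\<in>UNIV. c ^ i * row_moment j c) = 0"
proof -
  have "(\<Sum>p\<in>UNIV. f p * aff_fun (1, 0, 0) p ^ j * aff_fun (0, 1, 0) p ^ i) = 0"
    using assms by (intro moments_vanish) simp
  then have "(\<Sum>a\<in>UNIV. \<Sum>c\<in>UNIV. f (a, c) * a ^ j * c ^ i) = 0"
    by (simp add: sum_UNIV_prod)
  then have "(\<Sum>c\<in>UNIV. \<Sum>a\<in>UNIV. f (a, c) * a ^ j * c ^ i) = 0"
    by (subst (asm) sum.swap)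
  then show ?thesis by (simp add: row_moment_def sum_distrib_left algebra_simps)
qed

lemma row_moment_poly:
  assumes "j \<le> CARD('a) - 2"
  obtains P where "degree P \<le> j" "\<And>c. row_moment j c = poly P c"
proof -
  have "j < CARD('a)" using assms card_ge_7 by linarith
  then show ?thesis
    using vanishing_moments_imp_poly[of j "row_moment j"] sum_power_row_moment_eq_0 that by blast
qed

definition mass :: 'a where
  "mass = row_moment 0 0"

lemma row_moment_0: "row_moment 0 c = mass"
proof -
  obtain P where P: "degree P \<le> 0" "\<And>c. row_moment 0 c = poly P c"
    using row_moment_poly[of 0] by blast
  then have "row_moment 0 c = coeff P 0" for c by (simp add: poly_altdef)
  then show ?thesis by (simp add: mass_def)
qed

lemma mass_nonzero: "mass \<noteq> 0"
  using line_sum_nonzero[of 1 0 0 0] by (simp add: mass_def row_moment_def)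

lemma row_nonempty: "row c \<noteq> {}"
  using row_moment_eq_sum_row[of 0 c] row_moment_0 mass_nonzero by auto

lemma sum_card_row: "(\<Sum>c\<in>UNIV. card (row c)) = 2 * CARD('a) - 1"
proof -
  have "card {p. f p \<noteq> 0} = (\<Sum>c\<in>UNIV. card {p\<in>{p. f p \<noteq> 0}. snd p = c})"
    by (rule card_eq_sum_card_fibers) simp
  also have "\<dots> = (\<Sum>c\<in>UNIV. card (row c))"
  proof (intro sum.cong refl)
    fix c
    have "{p\<in>{p. f p \<noteq> 0}. snd p = c} = (\<lambda>a. (a, c)) ` row c" by (auto simp: row_def)
    then show "card {p\<in>{p. f p \<noteq> 0}. snd p = c} = card (row c)"
      by (simp add: card_image inj_on_def)
  qed
  finally show ?thesis using card_support by simp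
qed

definition centroid :: "'a \<Rightarrow> 'a" where
  "centroid c = row_moment 1 c / mass"

lemma centroid_affine: "\<exists>m0 m1. \<forall>c. centroid c = m0 + m1 * c"
proof -
  have "1 \<le> CARD('a) - 2" using card_ge_7 by linarith
  then obtain P where P: "degree P \<le> 1" "\<And>c. row_moment 1 c = poly P c"
    using row_moment_poly by blast
  have "poly P c = (\<Sum>i\<le>1. coeff P i * c ^ i)" for c
    unfolding poly_altdef using P(1) by (intro sum.mono_neutral_left) (auto simp: coeff_eq_0)
  then have "poly P c = coeff P 0 + coeff P 1 * c" for c
    by (simp add: numeral_1_eq_Suc_0 atMost_Suc)
  then have "centroid c = coeff P 0 / mass + coeff P 1 / mass * c" for c
    unfolding centroid_def P(2) by (simp add: add_divide_distrib)
  then show ?thesis by blast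
qed

definition thin_rows :: "'a set" where
  "thin_rows = {c. card (row c) = 1}"

lemma row_thin:
  assumes "c \<in> thin_rows"
  shows "row c = {centroid c}" and "f (centroid c, c) = mass"
proof -
  have "card (row c) = 1" using assms by (simp add: thin_rows_def)
  then obtain a where a: "row c = {a}" by (rule card_1_singletonE)
  have fa: "f (a, c) = mass" using row_moment_eq_sum_row[of 0 c] row_moment_0[of c] a by simp
  have "row_moment 1 c = mass * a" using row_moment_eq_sum_row[of 1 c] a fa by simp
  then have "centroid c = a" using mass_nonzero by (simp add: centroid_def)
  with a fa show "row c = {centroid c}" "f (centroid c, c) = mass" by simp_all
qed

lemma card_thin_rows_less: "card thin_rows < CARD('a)"
proof (rule ccontr)
  assume "\<not> ?thesis"
  then have "thin_rows = UNIV"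
    using card_mono[of UNIV thin_rows] by (intro card_subset_eq) auto
  then have "card (row c) = 1" for c by (auto simp: thin_rows_def)
  then have "(\<Sum>c\<in>UNIV. card (row c)) = CARD('a)" by simp
  with sum_card_row card_ge_7 show False by simp
qed

text \<open>On a thin row the row moments are those of the weight \<open>mass\<close> at the centroid; both sides
  are polynomials of degree \<open>j\<close> in \<open>c\<close>, so they agree everywhere if \<open>j < card thin_rows\<close>.\<close>

lemma row_moment_eq_centroid_power:
  assumes "j < card thin_rows"
  shows "row_moment j c = mass * centroid c ^ j"
proof -
  obtain m0 m1 where m: "\<And>c. centroid c = m0 + m1 * c" using centroid_affine by blast
  have "j \<le> CARD('a) - 2" using assms card_thin_rows_less by linarith
  then obtain P where P: "degree P \<le> j" "\<And>c. row_moment j c = poly P c"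
    using row_moment_poly by blast
  define Q where "Q = smult mass ([:m0, m1:] ^ j)"
  have "degree Q \<le> degree [:m0, m1:] * j"
    unfolding Q_def by (rule order.trans[OF degree_smult_le degree_power_le])
  also have "\<dots> \<le> j" by simp
  finally have "degree Q \<le> j" .
  have Q: "poly Q c = mass * centroid c ^ j" for c by (simp add: Q_def m algebra_simps)
  have "P = Q"
  proof (rule poly_eqI_degree[of thin_rows])
    show "poly P c = poly Q c" if "c \<in> thin_rows" for c
      using that row_thin[OF that] by (simp add: P(2)[symmetric] Q row_moment_eq_sum_row)
    show "degree P < card thin_rows" "degree Q < card thin_rows"
      using P(1) \<open>degree Q \<le> j\<close> assms by simp_all
  qed
  then show ?thesis by (simp add: P(2) Q)
qed

lemma sum_row_poly:
  assumes "degree h < card thin_rows"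
  shows "(\<Sum>a\<in>UNIV. f (a, c) * poly h a) = mass * poly h (centroid c)"
proof -
  have "(\<Sum>a\<in>UNIV. f (a, c) * poly h a) = (\<Sum>i\<le>degree h. coeff h i * row_moment i c)"
    by (simp add: poly_altdef row_moment_def sum_distrib_left algebra_simps) (rule sum.swap)
  also have "\<dots> = (\<Sum>i\<le>degree h. coeff h i * (mass * centroid c ^ i))"
    using assms by (intro sum.cong refl) (simp add: row_moment_eq_centroid_power)
  finally show ?thesis by (simp add: poly_altdef sum_distrib_left algebra_simps)
qed

text \<open>A row with \<open>r < card thin_rows\<close> support points is tested by the polynomials vanishing on all
  of them (forcing the centroid into the row) and on all but one of them (a contradiction).\<close>

lemma card_row_ge_thin:
  assumes "card (row c) \<ge> 2"
  shows "card (row c) \<ge> card thin_rows"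
proof (rule ccontr)
  assume "\<not> ?thesis"
  then have small: "card (row c) < card thin_rows" by simp
  let ?vanish = "\<lambda>S. \<Prod>a\<in>S. [:- a, 1:]"
  have deg: "degree (?vanish S) \<le> card S" if "finite S" for S :: "'a set"
    using degree_prod_sum_le[OF that, of "\<lambda>a. [:- a, 1:]"] by simp
  have "(\<Sum>a\<in>UNIV. f (a, c) * poly (?vanish (row c)) a) = 0"
    by (intro sum.neutral) (auto simp: poly_prod row_def)
  then have "poly (?vanish (row c)) (centroid c) = 0"
    using sum_row_poly[of "?vanish (row c)" c] deg[of "row c"] small mass_nonzero by simp
  then have centroid_in: "centroid c \<in> row c" by (simp add: poly_prod prod_zero_iff)
  obtain a1 where a1: "a1 \<in> row c" "a1 \<noteq> centroid c"
  proof -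
    have "\<not> row c \<subseteq> {centroid c}" using assms card_mono[of "{centroid c}" "row c"] by auto
    then show ?thesis using that by blast
  qed
  let ?h = "?vanish (row c - {a1})"
  have "degree ?h < card thin_rows"
    using deg[of "row c - {a1}"] small a1(1) by (simp add: card_Diff_singleton)
  then have "(\<Sum>a\<in>UNIV. f (a, c) * poly ?h a) = 0"
    using sum_row_poly[of ?h c] centroid_in a1 by (simp add: poly_prod prod_zero_iff)
  moreover have "(\<Sum>a\<in>UNIV. f (a, c) * poly ?h a) = (\<Sum>a\<in>{a1}. f (a, c) * poly ?h a)"
    by (intro sum.mono_neutral_right) (auto simp: poly_prod prod_zero_iff row_def)
  moreover have "f (a1, c) * poly ?h a1 \<noteq> 0"
    using a1(1) by (simp add: row_def poly_prod prod_zero_iff)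
  ultimately show False by simp
qed

text \<open>With at least three thin rows, counting support points forces all but one row to be thin.\<close>

lemma card_thin_rows_eq:
  assumes "card thin_rows \<ge> 3"
  shows "card thin_rows = CARD('a) - 1"
proof (rule ccontr)
  let ?q = "CARD('a)" and ?k = "card thin_rows"
  assume "?k \<noteq> ?q - 1"
  then have r: "?q - ?k \<ge> 2" using card_thin_rows_less by linarith
  have "(\<Sum>c\<in>UNIV. card (row c))
          = (\<Sum>c\<in>thin_rows. card (row c)) + (\<Sum>c\<in>UNIV - thin_rows. card (row c))"
    by (simp add: sum.subset_diff[of thin_rows UNIV])
  moreover have "(\<Sum>c\<in>thin_rows. card (row c)) = ?k" by (simp add: thin_rows_def)
  moreover have "(\<Sum>c\<in>UNIV - thin_rows. card (row c)) \<ge> (\<Sum>c\<in>UNIV - thin_rows. ?k)"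
  proof (intro sum_mono card_row_ge_thin)
    fix c assume "c \<in> UNIV - thin_rows"
    then have "card (row c) \<noteq> 1" by (simp add: thin_rows_def)
    moreover have "card (row c) \<noteq> 0" using row_nonempty[of c] by simp
    ultimately show "card (row c) \<ge> 2" by linarith
  qed
  ultimately have ineq: "?k + (?q - ?k) * ?k \<le> 2 * ?q - 1"
    using sum_card_row by (simp add: card_Diff_subset)
  define r where "r = ?q - ?k - 2"
  define k where "k = ?k - 3"
  have "?q - ?k = r + 2" "?k = k + 3" "?q = r + k + 5" using r assms by (simp_all add: r_def k_def)
  with ineq have "(k + 3) + (r + 2) * (k + 3) \<le> 2 * (r + k + 5) - 1" by simp
  with \<open>?q = r + k + 5\<close> card_ge_7 show False by (simp add: algebra_simps)
qed

lemma support_if_three_thin_rows: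
  assumes "card thin_rows \<ge> 3"
  shows "\<exists>c0 m0 m1. \<forall>p. f p \<noteq> 0 \<longleftrightarrow> snd p = c0 \<or> fst p = m0 + m1 * snd p"
proof -
  obtain m0 m1 where m: "\<And>c. centroid c = m0 + m1 * c" using centroid_affine by blast
  have "card (UNIV - thin_rows) = 1"
    using card_thin_rows_eq[OF assms] card_ge_7 by (simp add: card_Diff_subset)
  then obtain c0 where c0: "UNIV - thin_rows = {c0}" by (rule card_1_singletonE)
  have "(\<Sum>c\<in>UNIV. card (row c)) = (\<Sum>c\<in>thin_rows. card (row c)) + card (row c0)"
    using c0 by (simp add: sum.subset_diff[of thin_rows UNIV])
  then have "card (row c0) = CARD('a)"
    using sum_card_row card_thin_rows_eq[OF assms] card_ge_7 by (simp add: thin_rows_def)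
  then have full: "row c0 = UNIV" by (intro card_subset_eq) auto
  have "f (a, c) \<noteq> 0 \<longleftrightarrow> c = c0 \<or> a = m0 + m1 * c" for a c
  proof (cases "c = c0")
    case False
    then have "c \<in> thin_rows" using c0 by auto
    then show ?thesis using row_thin(1)[of c] False by (auto simp: row_def m)
  qed (use full in \<open>auto simp: row_def\<close>)
  then show ?thesis by auto
qed

lemma plane_weight_linear_comp:
  assumes det: "\<alpha> * \<delta> - \<beta> * \<gamma> \<noteq> 0"
  shows "plane_weight (\<lambda>p. f (linmap2 \<alpha> \<beta> \<gamma> \<delta> p))"
proof
  let ?\<phi> = "linmap2 \<alpha> \<beta> \<gamma> \<delta>"
  have bij: "bij ?\<phi>" using det by (rule bij_linmap2)
  {
    fix i j :: nat and a b :: "'a vec3"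
    assume ij: "i + j \<le> CARD('a) - 2"
    obtain a' b' where "\<And>p. aff_fun a' (?\<phi> p) = aff_fun a p" "\<And>p. aff_fun b' (?\<phi> p) = aff_fun b p"
      using aff_fun_linmap2_pullback[OF det] by metis
    then have "(\<Sum>p\<in>UNIV. f (?\<phi> p) * aff_fun a p ^ i * aff_fun b p ^ j)
                 = (\<Sum>p\<in>UNIV. f (?\<phi> p) * aff_fun a' (?\<phi> p) ^ i * aff_fun b' (?\<phi> p) ^ j)" by simp
    also have "\<dots> = (\<Sum>p\<in>UNIV. f p * aff_fun a' p ^ i * aff_fun b' p ^ j)"
      using sum.reindex_bij_betw[OF bij, of "\<lambda>p. f p * aff_fun a' p ^ i * aff_fun b' p ^ j"] by simp
    also have "\<dots> = 0" using ij by (rule moments_vanish)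
    finally show "(\<Sum>p\<in>UNIV. f (?\<phi> p) * aff_fun a p ^ i * aff_fun b p ^ j) = 0" .
  next
    fix d1 d2 s0 t0 :: 'a
    assume "(d1, d2) \<noteq> (0, 0)"
    then have "?\<phi> (d1, d2) \<noteq> ?\<phi> (0, 0)" using bij by (metis bij_def injD)
    then have "(fst (?\<phi> (d1, d2)), snd (?\<phi> (d1, d2))) \<noteq> (0, 0)" by (simp add: linmap2_def)
    then have "(\<Sum>t\<in>UNIV. f (fst (?\<phi> (s0, t0)) + t * fst (?\<phi> (d1, d2)),
                             snd (?\<phi> (s0, t0)) + t * snd (?\<phi> (d1, d2)))) \<noteq> 0"
      by (rule line_sum_nonzero)
    then show "(\<Sum>t\<in>UNIV. f (?\<phi> (s0 + t * d1, t0 + t * d2))) \<noteq> 0"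
      by (simp add: linmap2_def algebra_simps)
  next
    have "card {p. f (?\<phi> p) \<noteq> 0} = card (?\<phi> -` {p. f p \<noteq> 0})" by (rule arg_cong[where f=card]) auto
    also have "\<dots> = card {p. f p \<noteq> 0}" using bij by (intro card_vimage_inj) (auto simp: bij_def)
    finally show "card {p. f (?\<phi> p) \<noteq> 0} = 2 * CARD('a) - 1"
      using card_support by simp
  }
qed (rule card_ge_7)

end

text \<open>A direction is \<open>None\<close> (vertical) or \<open>Some m\<close> (slope \<open>m\<close>); \<open>line_key dd\<close> labels the
  lines of direction \<open>dd\<close>, \<open>line_pos dd\<close> is a coordinate along them, and \<open>dir_coords dd\<close>
  is the inverse chart.\<close>

definition line_key :: "'a::field option \<Rightarrow> 'a \<times> 'a \<Rightarrow> 'a" where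
  "line_key dd p = (case dd of None \<Rightarrow> fst p | Some m \<Rightarrow> snd p - m * fst p)"

definition line_pos :: "'a::field option \<Rightarrow> 'a \<times> 'a \<Rightarrow> 'a" where
  "line_pos dd p = (case dd of None \<Rightarrow> snd p | Some m \<Rightarrow> fst p)"

definition dir_coords :: "'a::field option \<Rightarrow> 'a \<times> 'a \<Rightarrow> 'a \<times> 'a" where
  "dir_coords dd p = (case dd of None \<Rightarrow> (snd p, fst p) | Some m \<Rightarrow> (fst p, snd p + m * fst p))"

lemma line_key_dir_coords [simp]: "line_key dd (dir_coords dd (a, c)) = c"
  by (cases dd) (simp_all add: line_key_def dir_coords_def)

lemma dir_coords_line_pos_key [simp]: "dir_coords dd (line_pos dd p, line_key dd p) = p"
  by (cases dd) (simp_all add: line_key_def line_pos_def dir_coords_def)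

lemma line_eq_image_dir_coords: "{p. line_key dd p = c} = (\<lambda>a. dir_coords dd (a, c)) ` UNIV"
proof
  show "{p. line_key dd p = c} \<subseteq> (\<lambda>a. dir_coords dd (a, c)) ` UNIV"
  proof
    fix p assume "p \<in> {p. line_key dd p = c}"
    then have "p = dir_coords dd (line_pos dd p, c)" using dir_coords_line_pos_key[of dd p] by simp
    then show "p \<in> (\<lambda>a. dir_coords dd (a, c)) ` UNIV" by blast
  qed
qed auto

lemma inj_dir_coords_line: "inj (\<lambda>a. dir_coords dd (a, c))"
  by (cases dd) (auto simp: inj_def dir_coords_def)

lemma card_line:
  fixes dd :: "'a::{finite,field} option"
  shows "card {p. line_key dd p = c} = CARD('a)"
  unfolding line_eq_image_dir_coords by (rule card_image[OF inj_dir_coords_line])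

definition direction :: "'a::field \<times> 'a \<Rightarrow> 'a \<times> 'a \<Rightarrow> 'a option" where
  "direction Q p = (if fst p = fst Q then None else Some ((snd p - snd Q) / (fst p - fst Q)))"

lemma direction_eq_Some_iff:
  assumes "p \<noteq> Q"
  shows "direction Q p = Some m \<longleftrightarrow> line_key (Some m) p = line_key (Some m) Q"
proof (cases "fst p = fst Q")
  case True
  with assms show ?thesis by (simp add: direction_def line_key_def prod_eq_iff)
next
  case False
  then have "direction Q p = Some m \<longleftrightarrow> snd p - snd Q = m * (fst p - fst Q)"
    by (simp add: direction_def divide_eq_eq)
  also have "\<dots> \<longleftrightarrow> line_key (Some m) p = line_key (Some m) Q"
    by (simp add: line_key_def algebra_simps)
  finally show ?thesis .
qed

lemma direction_eq_iff:
  assumes "p \<noteq> Q"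
  shows "direction Q p = dd \<longleftrightarrow> line_key dd p = line_key dd Q"
proof (cases dd)
  case None
  then show ?thesis by (simp add: direction_def line_key_def)
next
  case (Some m)
  then show ?thesis using direction_eq_Some_iff[OF assms] by simp
qed

lemma two_lines_in_dir_coords:
  "\<exists>b1 b2 b3 g1 g2 g3 :: 'a::field. b1 * g2 - b2 * g1 \<noteq> 0 \<and>
     (\<forall>p. (line_key dd p = c0 \<or> line_pos dd p = m0 + m1 * line_key dd p)
            \<longleftrightarrow> aff_fun (b1, b2, b3) p = 0 \<or> aff_fun (g1, g2, g3) p = 0)"
proof (cases dd)
  case None
  have "aff_fun (1, 0, - c0) p = line_key dd p - c0"
    "aff_fun (- m1, 1, - m0) p = line_pos dd p - (m0 + m1 * line_key dd p)" for p
    by (simp_all add: None line_key_def line_pos_def aff_fun_def algebra_simps)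
  then show ?thesis
    by (intro exI[of _ 1] exI[of _ 0] exI[of _ "- c0"] exI[of _ "- m1"] exI[of _ 1]
        exI[of _ "- m0"]) simp
next
  case (Some m)
  have "aff_fun (- m, 1, - c0) p = line_key dd p - c0"
    "aff_fun (1 + m1 * m, - m1, - m0) p = line_pos dd p - (m0 + m1 * line_key dd p)" for p
    by (simp_all add: Some line_key_def line_pos_def aff_fun_def algebra_simps)
  moreover have "(- m) * (- m1) - 1 * (1 + m1 * m) \<noteq> (0::'a)" by (simp add: algebra_simps)
  ultimately show ?thesis
    by (intro exI[of _ "- m"] exI[of _ 1] exI[of _ "- c0"] exI[of _ "1 + m1 * m"] exI[of _ "- m1"]
        exI[of _ "- m0"]) simp
qed

context plane_weight
begin

lemma plane_weight_dir_coords: "plane_weight (\<lambda>p. f (dir_coords dd p))"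
proof (cases dd)
  case None
  then show ?thesis using plane_weight_linear_comp[of 0 0 1 1] by (simp add: dir_coords_def linmap2_def)
next
  case (Some m)
  then show ?thesis
    using plane_weight_linear_comp[of 1 1 0 m] by (simp add: dir_coords_def linmap2_def add.commute)
qed

definition line_count :: "'a option \<Rightarrow> 'a \<Rightarrow> nat" where
  "line_count dd c = card {p. f p \<noteq> 0 \<and> line_key dd p = c}"

definition thin_lines :: "'a option \<Rightarrow> 'a set" where
  "thin_lines dd = {c. line_count dd c = 1}"

lemma line_count_eq_card_row:
  "line_count dd c = card (plane_weight.row (\<lambda>p. f (dir_coords dd p)) c)"
proof -
  interpret G: plane_weight "\<lambda>p. f (dir_coords dd p)" by (rule plane_weight_dir_coords)
  have "{p. f p \<noteq> 0 \<and> line_key dd p = c} = (\<lambda>a. dir_coords dd (a, c)) ` G.row c"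
  proof
    show "{p. f p \<noteq> 0 \<and> line_key dd p = c} \<subseteq> (\<lambda>a. dir_coords dd (a, c)) ` G.row c"
    proof
      fix p assume p: "p \<in> {p. f p \<noteq> 0 \<and> line_key dd p = c}"
      then have "p = dir_coords dd (line_pos dd p, c)"
        using dir_coords_line_pos_key[of dd p] by simp
      with p show "p \<in> (\<lambda>a. dir_coords dd (a, c)) ` G.row c" by (auto simp: G.row_def)
    qed
  qed (auto simp: G.row_def)
  then show ?thesis
    by (simp add: line_count_def card_image inj_on_subset[OF inj_dir_coords_line])
qed

lemma thin_lines_eq_thin_rows:
  "thin_lines dd = plane_weight.thin_rows (\<lambda>p. f (dir_coords dd p))"
  by (simp add: thin_lines_def plane_weight.thin_rows_def[OF plane_weight_dir_coords]
      line_count_eq_card_row)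

lemma line_count_pos: "line_count dd c \<ge> 1"
  using plane_weight.row_nonempty[OF plane_weight_dir_coords, of dd c]
  by (simp add: line_count_eq_card_row Suc_le_eq card_gt_0_iff)

lemma card_zeros_on_line:
  "card {p. f p = 0 \<and> line_key dd p = c} = CARD('a) - line_count dd c"
proof -
  have "{p. line_key dd p = c}
          = {p. f p = 0 \<and> line_key dd p = c} \<union> {p. f p \<noteq> 0 \<and> line_key dd p = c}"
    by auto
  then have "card {p. line_key dd p = c}
               = card {p. f p = 0 \<and> line_key dd p = c} + card {p. f p \<noteq> 0 \<and> line_key dd p = c}"
    by (simp add: card_Un_disjoint[symmetric] disjoint_iff)
  then show ?thesis using card_line[of dd c] unfolding line_count_def by linarith
qed

lemma sum_line_count_through:
  assumes "f Q = 0"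
  shows "(\<Sum>dd\<in>UNIV. line_count dd (line_key dd Q)) = 2 * CARD('a) - 1"
proof -
  have "card {p. f p \<noteq> 0} = (\<Sum>dd\<in>UNIV. card {p\<in>{p. f p \<noteq> 0}. direction Q p = dd})"
    by (rule card_eq_sum_card_fibers) simp
  also have "\<dots> = (\<Sum>dd\<in>UNIV. line_count dd (line_key dd Q))"
  proof (intro sum.cong refl)
    fix dd
    have "{p\<in>{p. f p \<noteq> 0}. direction Q p = dd} = {p. f p \<noteq> 0 \<and> line_key dd p = line_key dd Q}"
      using direction_eq_iff[of _ Q dd] assms by force
    then show "card {p\<in>{p. f p \<noteq> 0}. direction Q p = dd} = line_count dd (line_key dd Q)"
      by (simp add: line_count_def)
  qed
  finally show ?thesis using card_support by simp
qed

text \<open>The \<open>q + 1\<close> lines through a zero carry \<open>2q - 1\<close> support points, at least one each.\<close>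

lemma three_thin_lines_through:
  assumes "f Q = 0"
  shows "card {dd. line_count dd (line_key dd Q) = 1} \<ge> 3"
proof -
  let ?r = "\<lambda>dd. line_count dd (line_key dd Q)"
  have "(\<Sum>dd\<in>(UNIV :: 'a option set). 2) \<le> (\<Sum>dd\<in>UNIV. ?r dd + (if ?r dd = 1 then 1 else 0))"
  proof (intro sum_mono)
    fix dd
    show "2 \<le> ?r dd + (if ?r dd = 1 then 1 else 0)"
      using line_count_pos[of dd "line_key dd Q"] by auto
  qed
  also have "\<dots> = (2 * CARD('a) - 1) + card {dd. ?r dd = 1}"
    by (simp add: sum.distrib sum_line_count_through[OF assms] sum.If_cases)
  finally show ?thesis using card_option card_ge_7 by simp
qed

lemma card_zeros_on_thin_lines:
  "card {Q. f Q = 0 \<and> line_count dd (line_key dd Q) = 1} = card (thin_lines dd) * (CARD('a) - 1)"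
proof -
  have "card {Q. f Q = 0 \<and> line_count dd (line_key dd Q) = 1}
          = (\<Sum>c\<in>UNIV. card {Q\<in>{Q. f Q = 0 \<and> line_count dd (line_key dd Q) = 1}. line_key dd Q = c})"
    by (rule card_eq_sum_card_fibers) simp
  also have "\<dots> = (\<Sum>c\<in>UNIV. if c \<in> thin_lines dd then CARD('a) - 1 else 0)"
  proof (intro sum.cong refl)
    fix c
    have "{Q\<in>{Q. f Q = 0 \<and> line_count dd (line_key dd Q) = 1}. line_key dd Q = c}
            = (if c \<in> thin_lines dd then {Q. f Q = 0 \<and> line_key dd Q = c} else {})"
      by (auto simp: thin_lines_def)
    then show "card {Q\<in>{Q. f Q = 0 \<and> line_count dd (line_key dd Q) = 1}. line_key dd Q = c}
                 = (if c \<in> thin_lines dd then CARD('a) - 1 else 0)"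
      by (simp add: card_zeros_on_line thin_lines_def)
  qed
  also have "\<dots> = card (thin_lines dd) * (CARD('a) - 1)"
    by (simp add: sum.If_cases)
  finally show ?thesis .
qed

text \<open>Double counting pairs (zero, thin line through it): each of the \<open>(q - 1)\<^sup>2\<close> zeros lies on at
  least three thin lines, while a direction with at most two thin lines contributes at most
  \<open>2(q - 1)\<close> pairs; this is impossible for \<open>q \<ge> 7\<close>.\<close>

lemma exists_three_thin_lines: "\<exists>dd. card (thin_lines dd) \<ge> 3"
proof (rule ccontr)
  let ?q = "CARD('a)"
  let ?Z = "{Q. f Q = 0}"
  assume "\<not> ?thesis"
  then have not3: "\<not> 3 \<le> card (thin_lines dd)" for dd by blast
  have le2: "card (thin_lines dd) \<le> 2" for dd using not3[of dd] by linarith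
  have "?Z = UNIV - {p. f p \<noteq> 0}" by auto
  then have "card ?Z = ?q * ?q - (2 * ?q - 1)" using card_support by (simp add: card_Diff_subset)
  then have cZ: "card ?Z = (?q - 1) * (?q - 1)" using card_ge_7 by (simp add: algebra_simps)
  have "(\<Sum>Q\<in>?Z. 3) \<le> (\<Sum>Q\<in>?Z. card {dd. line_count dd (line_key dd Q) = 1})"
    by (intro sum_mono three_thin_lines_through) simp
  also have "\<dots> = (\<Sum>Q\<in>?Z. \<Sum>dd\<in>UNIV. of_bool (line_count dd (line_key dd Q) = 1))"
    by simp
  also have "\<dots> = (\<Sum>dd\<in>UNIV. \<Sum>Q\<in>?Z. of_bool (line_count dd (line_key dd Q) = 1))"
    by (rule sum.swap)
  also have "\<dots> = (\<Sum>dd\<in>UNIV. card {Q. f Q = 0 \<and> line_count dd (line_key dd Q) = 1})"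
    by (simp add: Int_def)
  also have "\<dots> = (\<Sum>dd\<in>UNIV. card (thin_lines dd) * (?q - 1))"
    by (intro sum.cong refl) (rule card_zeros_on_thin_lines)
  also have "\<dots> \<le> (\<Sum>dd\<in>(UNIV :: 'a option set). 2 * (?q - 1))"
    by (intro sum_mono mult_right_mono le2) simp
  finally have "3 * ((?q - 1) * (?q - 1)) \<le> Suc ?q * (2 * (?q - 1))"
    using cZ by (simp add: card_option)
  moreover obtain r where "?q = r + 1"
    using card_ge_7 by (metis add.commute le_add_diff_inverse2 le_trans one_le_numeral)
  ultimately have "3 * (r * r) \<le> (r + 2) * (2 * r)" by simp
  then have "r * r \<le> 4 * r" by (simp add: algebra_simps)
  moreover have "6 * r \<le> r * r" using \<open>?q = r + 1\<close> card_ge_7 by (intro mult_right_mono) simp_all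
  ultimately show False using \<open>?q = r + 1\<close> card_ge_7 by linarith
qed

theorem support_two_lines:
  "\<exists>b1 b2 b3 g1 g2 g3. b1 * g2 - b2 * g1 \<noteq> 0 \<and>
     (\<forall>p. f p \<noteq> 0 \<longleftrightarrow> aff_fun (b1, b2, b3) p = 0 \<or> aff_fun (g1, g2, g3) p = 0)"
proof -
  obtain dd where dd: "card (thin_lines dd) \<ge> 3" using exists_three_thin_lines by blast
  interpret G: plane_weight "\<lambda>p. f (dir_coords dd p)" by (rule plane_weight_dir_coords)
  obtain c0 m0 m1 where "\<forall>p. f (dir_coords dd p) \<noteq> 0 \<longleftrightarrow> snd p = c0 \<or> fst p = m0 + m1 * snd p"
    using G.support_if_three_thin_rows dd by (auto simp: thin_lines_eq_thin_rows)
  then have "\<forall>p. f p \<noteq> 0 \<longleftrightarrow> line_key dd p = c0 \<or> line_pos dd p = m0 + m1 * line_key dd p"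
    by (metis dir_coords_line_pos_key fst_conv snd_conv)
  with two_lines_in_dir_coords[of dd c0 m0 m1] show ?thesis by blast
qed

end

section \<open>Points and lines of the projective plane\<close>

lemma dot3_scale3_right: "dot3 l (scale3 c v) = c * dot3 l v"
  by (cases l, cases v) (simp add: algebra_simps)

lemma dot3_scale3_left: "dot3 (scale3 c l) v = c * dot3 l v"
  by (cases l, cases v) (simp add: algebra_simps)

lemma scale3_scale3: "scale3 c (scale3 d v) = scale3 (c * d) v"
  by (cases v) (simp add: algebra_simps)

lemma proj_class_eq: "proj_class v = {scale3 c v | c. c \<noteq> 0}"
  by (cases v) (simp add: proj_class_def)

lemma proj_class_self: "v \<in> proj_class (v :: 'a::field vec3)"
  unfolding proj_class_eq by (auto intro: exI[of _ 1] simp: scale3_def split: prod.split)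

lemma proj_class_scale3:
  assumes c: "c \<noteq> 0"
  shows "proj_class (scale3 c v) = proj_class (v :: 'a::field vec3)"
proof (intro set_eqI iffI)
  fix x assume "x \<in> proj_class (scale3 c v)"
  then obtain e where "e \<noteq> 0" "x = scale3 e (scale3 c v)" by (auto simp: proj_class_eq)
  then have "x = scale3 (e * c) v" "e * c \<noteq> 0" using c by (simp_all add: scale3_scale3)
  then show "x \<in> proj_class v" unfolding proj_class_eq by blast
next
  fix x assume "x \<in> proj_class v"
  then obtain e where "e \<noteq> 0" "x = scale3 e v" by (auto simp: proj_class_eq)
  then have "x = scale3 (e / c) (scale3 c v)" "e / c \<noteq> 0" using c by (simp_all add: scale3_scale3)
  then show "x \<in> proj_class (scale3 c v)" unfolding proj_class_eq by blast
qed

lemma proj_ptsE: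
  assumes "P \<in> proj_pts"
  obtains v where "v \<noteq> (0, 0, 0)" "P = proj_class v"
  using assms by (auto simp: proj_pts_def)

lemma proj_class_in_curve_pts_iff:
  assumes "v \<noteq> (0, 0, 0)"
  shows "proj_class v \<in> curve_pts d F \<longleftrightarrow> heval d F v = (0 :: 'a::field)"
proof -
  have "proj_class v \<in> proj_pts" unfolding proj_pts_def using assms by blast
  show ?thesis
  proof
    assume "proj_class v \<in> curve_pts d F"
    then show "heval d F v = 0" using proj_class_self[of v] by (auto simp: curve_pts_def)
  next
    assume "heval d F v = 0"
    then have "\<forall>w\<in>proj_class v. heval d F w = 0" by (auto simp: proj_class_eq heval_scale3)
    with \<open>proj_class v \<in> proj_pts\<close> show "proj_class v \<in> curve_pts d F" by (simp add: curve_pts_def)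
  qed
qed

lemma proj_class_in_line_pts_iff:
  assumes "v \<noteq> (0, 0, 0)"
  shows "proj_class v \<in> line_pts l \<longleftrightarrow> dot3 l (v :: 'a::field vec3) = 0"
proof -
  have "proj_class v \<in> proj_pts" unfolding proj_pts_def using assms by blast
  then have "proj_class v \<in> line_pts l \<longleftrightarrow> (\<forall>w\<in>proj_class v. dot3 l w = 0)"
    by (cases l) (auto simp: line_pts_def)
  also have "\<dots> \<longleftrightarrow> dot3 l v = 0"
  proof
    assume "\<forall>w\<in>proj_class v. dot3 l w = 0"
    then show "dot3 l v = 0" using proj_class_self[of v] by blast
  next
    assume "dot3 l v = 0"
    then show "\<forall>w\<in>proj_class v. dot3 l w = 0" by (auto simp: proj_class_eq dot3_scale3_right)
  qed
  finally show ?thesis .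
qed

lemma line_pts_subset: "line_pts l \<subseteq> proj_pts"
  by (cases l) (auto simp: line_pts_def)

lemma line_pts_eqI:
  assumes "\<And>v. dot3 l v = 0 \<longleftrightarrow> dot3 m v = 0"
  shows "line_pts l = line_pts (m :: 'a::field vec3)"
proof -
  have "P \<in> line_pts l \<longleftrightarrow> P \<in> line_pts m" for P
  proof (cases "P \<in> proj_pts")
    case True
    then obtain v where v: "v \<noteq> (0, 0, 0)" "P = proj_class v" by (rule proj_ptsE)
    then show ?thesis using assms[of v] proj_class_in_line_pts_iff[OF v(1)] by simp
  qed (use line_pts_subset in blast)
  then show ?thesis by blast
qed

lemma line_pts_scale3: "c \<noteq> 0 \<Longrightarrow> line_pts (scale3 c l) = line_pts (l :: 'a::field vec3)"
  by (intro line_pts_eqI) (simp add: dot3_scale3_left)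

text \<open>\<open>lincomb3 A B C\<close> is the linear map with columns \<open>A, B, C\<close> and \<open>dual3 A B C\<close> its transpose.\<close>

definition lincomb3 :: "'a::comm_ring_1 vec3 \<Rightarrow> 'a vec3 \<Rightarrow> 'a vec3 \<Rightarrow> 'a vec3 \<Rightarrow> 'a vec3" where
  "lincomb3 A B C w = (case A of (a1, a2, a3) \<Rightarrow> case B of (b1, b2, b3) \<Rightarrow> case C of (c1, c2, c3) \<Rightarrow>
      (dot3 (a1, b1, c1) w, dot3 (a2, b2, c2) w, dot3 (a3, b3, c3) w))"

definition dual3 :: "'a::comm_ring_1 vec3 \<Rightarrow> 'a vec3 \<Rightarrow> 'a vec3 \<Rightarrow> 'a vec3 \<Rightarrow> 'a vec3" where
  "dual3 A B C l = (dot3 l A, dot3 l B, dot3 l C)"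

lemma dual3_zero: "dual3 A B C (0, 0, 0) = (0, 0, 0)"
  by (cases A, cases B, cases C) (simp add: dual3_def)

lemma dot3_lincomb3: "dot3 l (lincomb3 A B C w) = dot3 (dual3 A B C l) w"
  by (cases l, cases A, cases B, cases C, cases w) (simp add: lincomb3_def dual3_def algebra_simps)

lemma lincomb3_scale3: "lincomb3 A B C (scale3 c w) = scale3 c (lincomb3 A B C w)"
  by (cases A, cases B, cases C, cases w) (simp add: lincomb3_def algebra_simps)

lemma dual3_scale3: "dual3 A B C (scale3 c l) = scale3 c (dual3 A B C l)"
  by (simp add: dual3_def dot3_scale3_left)

lemma lincomb3_eq:
  "lincomb3 (a1, a2, a3) (b1, b2, b3) (c1, c2, c3) w
     = (dot3 (a1, b1, c1) w, dot3 (a2, b2, c2) w, dot3 (a3, b3, c3) w)"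
  by (simp add: lincomb3_def)

lemma dot3_diff: "dot3 l (s - s', t - t', u - u') = dot3 l (s, t, u) - dot3 l (s', t', u')"
  by (cases l) (simp add: algebra_simps)

lemma inj_lincomb3:
  assumes ker: "\<And>w. lincomb3 A B C w = (0, 0, 0) \<Longrightarrow> w = (0, 0, 0)"
  shows "inj (lincomb3 A B C)"
proof (rule injI)
  fix v w :: "'a vec3"
  assume eq: "lincomb3 A B C v = lincomb3 A B C w"
  obtain s t u s' t' u' where vw: "v = (s, t, u)" "w = (s', t', u')" by (cases v, cases w)
  obtain a1 a2 a3 b1 b2 b3 c1 c2 c3
    where ABC: "A = (a1, a2, a3)" "B = (b1, b2, b3)" "C = (c1, c2, c3)"
    by (cases A, cases B, cases C)
  have "lincomb3 A B C (s - s', t - t', u - u') = (0, 0, 0)"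
    using eq unfolding vw ABC lincomb3_eq dot3_diff by simp
  then show "v = w" using ker vw by fastforce
qed

lemma exists_frame_for_line:
  fixes l :: "'a::field vec3"
  assumes "l \<noteq> (0, 0, 0)"
  shows "\<exists>A B C. dot3 l A = 0 \<and> dot3 l B = 0 \<and> dot3 l C = 1 \<and>
           (\<forall>w. lincomb3 A B C w = (0, 0, 0) \<longrightarrow> w = (0, 0, 0))"
proof -
  obtain a b c where l: "l = (a, b, c)" by (cases l)
  have frame: "dot3 l A = 0 \<and> dot3 l B = 0 \<and> dot3 l C = 1 \<and>
      (\<forall>w. lincomb3 A B C w = (0, 0, 0) \<longrightarrow> w = (0, 0, 0))"
    if "dot3 l A = 0" "dot3 l B = 0" "dot3 l C = 1"
       "\<And>s t u. lincomb3 A B C (s, t, u) = (0, 0, 0) \<Longrightarrow> s = 0 \<and> t = 0 \<and> u = 0" for A B C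
    using that by auto
  consider "a \<noteq> 0" | "a = 0" "b \<noteq> 0" | "a = 0" "b = 0" "c \<noteq> 0" using assms l by auto
  then show ?thesis
  proof cases
    case 1
    then show ?thesis
      by (intro exI[of _ "(- b, a, 0)"] exI[of _ "(- c, 0, a)"] exI[of _ "(1 / a, 0, 0)"] frame)
        (auto simp: l lincomb3_def)
  next
    case 2
    then show ?thesis
      by (intro exI[of _ "(b, - a, 0)"] exI[of _ "(0, - c, b)"] exI[of _ "(0, 1 / b, 0)"] frame)
        (auto simp: l lincomb3_def)
  next
    case 3
    then show ?thesis
      by (intro exI[of _ "(c, 0, - a)"] exI[of _ "(0, c, - b)"] exI[of _ "(0, 0, 1 / c)"] frame)
        (auto simp: l lincomb3_def)
  qed
qed

lemma card_aff_fun_zeros: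
  fixes a1 a2 a3 :: "'a::{finite,field}"
  assumes "(a1, a2) \<noteq> (0, 0)"
  shows "card {p. aff_fun (a1, a2, a3) p = 0} = CARD('a)"
proof (cases "a2 = 0")
  case False
  have eq: "a1 * s + a2 * t + a3 = 0 \<longleftrightarrow> t = - (a1 * s + a3) / a2" for s t
    using False by (auto simp: eq_divide_eq eq_neg_iff_add_eq_0 algebra_simps)
  have "{p. aff_fun (a1, a2, a3) p = 0} = (\<lambda>s. (s, - (a1 * s + a3) / a2)) ` UNIV"
  proof (intro set_eqI)
    fix p :: "'a \<times> 'a"
    show "p \<in> {p. aff_fun (a1, a2, a3) p = 0} \<longleftrightarrow> p \<in> (\<lambda>s. (s, - (a1 * s + a3) / a2)) ` UNIV"
      using eq[of "fst p" "snd p"] by (cases p) auto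
  qed
  then show ?thesis by (simp add: card_image inj_on_def)
next
  case True
  with assms have "a1 \<noteq> 0" by auto
  then have eq: "a1 * s + a2 * t + a3 = 0 \<longleftrightarrow> s = - (a2 * t + a3) / a1" for s t
    by (auto simp: eq_divide_eq eq_neg_iff_add_eq_0 algebra_simps)
  have "{p. aff_fun (a1, a2, a3) p = 0} = (\<lambda>t. (- (a2 * t + a3) / a1, t)) ` UNIV"
  proof (intro set_eqI)
    fix p :: "'a \<times> 'a"
    show "p \<in> {p. aff_fun (a1, a2, a3) p = 0} \<longleftrightarrow> p \<in> (\<lambda>t. (- (a2 * t + a3) / a1, t)) ` UNIV"
      using eq[of "fst p" "snd p"] by (cases p) auto
  qed
  then show ?thesis by (simp add: card_image inj_on_def)
qed

lemma aff_fun_common_zeros_det: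
  fixes a1 a2 a3 b1 b2 b3 :: "'a::field"
  assumes "aff_fun (a1, a2, a3) p = 0" "aff_fun (b1, b2, b3) p = 0"
    and "aff_fun (a1, a2, a3) p' = 0" "aff_fun (b1, b2, b3) p' = 0"
    and "p \<noteq> p'"
  shows "a1 * b2 = a2 * b1"
proof -
  obtain s t s' t' where pp: "p = (s, t)" "p' = (s', t')" by (cases p, cases p')
  define w1 where "w1 = s' - s"
  define w2 where "w2 = t' - t"
  have w: "(w1, w2) \<noteq> (0, 0)" using \<open>p \<noteq> p'\<close> pp by (auto simp: w1_def w2_def)
  have "a1 * w1 + a2 * w2 = aff_fun (a1, a2, a3) p' - aff_fun (a1, a2, a3) p"
    "b1 * w1 + b2 * w2 = aff_fun (b1, b2, b3) p' - aff_fun (b1, b2, b3) p"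
    by (simp_all add: pp w1_def w2_def algebra_simps)
  then have e1: "a1 * w1 = - (a2 * w2)" and e2: "b1 * w1 = - (b2 * w2)"
    using assms by (simp_all add: eq_neg_iff_add_eq_0)
  show ?thesis
  proof (cases "w1 = 0")
    case True
    with w e1 e2 show ?thesis by auto
  next
    case False
    have "(a1 * b2 - a2 * b1) * w1 = (a1 * w1) * b2 - a2 * (b1 * w1)" by (simp add: algebra_simps)
    also have "\<dots> = 0" unfolding e1 e2 by (simp add: algebra_simps)
    finally show ?thesis using False by simp
  qed
qed

lemma aff_fun_proportional:
  fixes a1 a2 a3 b1 b2 b3 :: "'a::field"
  assumes a: "(a1, a2) \<noteq> (0, 0)" and b: "(b1, b2) \<noteq> (0, 0)"
    and p: "aff_fun (a1, a2, a3) p = 0" "aff_fun (b1, b2, b3) p = 0"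
    and p': "aff_fun (a1, a2, a3) p' = 0" "aff_fun (b1, b2, b3) p' = 0"
    and "p \<noteq> p'"
  shows "\<exists>k. k \<noteq> 0 \<and> b1 = k * a1 \<and> b2 = k * a2 \<and> b3 = k * a3"
proof -
  have det: "a1 * b2 = a2 * b1" using p p' \<open>p \<noteq> p'\<close> by (rule aff_fun_common_zeros_det)
  define k where "k = (if a1 \<noteq> 0 then b1 / a1 else b2 / a2)"
  have l1: "b1 = k * a1"
  proof (cases "a1 = 0")
    case True
    with a det show ?thesis by (simp add: k_def)
  qed (simp add: k_def)
  have l2: "b2 = k * a2"
  proof (cases "a1 = 0")
    case True
    with a show ?thesis by (simp add: k_def)
  next
    case False
    with det show ?thesis by (simp add: k_def field_simps)
  qed
  obtain s t where "p = (s, t)" by (cases p)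
  with p have pa: "a1 * s + a2 * t = - a3" "b1 * s + b2 * t = - b3"
    by (simp_all add: eq_neg_iff_add_eq_0 algebra_simps)
  have "b3 = - (b1 * s + b2 * t)" using pa by simp
  also have "\<dots> = k * (- (a1 * s + a2 * t))" using l1 l2 by (simp add: algebra_simps)
  also have "- (a1 * s + a2 * t) = a3" using pa by simp
  finally have "b3 = k * a3" .
  moreover have "k \<noteq> 0" using b l1 l2 by auto
  ultimately show ?thesis using l1 l2 by blast
qed

lemma two_distinct_elems:
  assumes "finite S" "card S \<ge> 2"
  shows "\<exists>x\<in>S. \<exists>y\<in>S. x \<noteq> y"
  using assms card_le_Suc0_iff_eq[OF assms(1)] by auto

lemma card_common_zeros_le_1:
  fixes b1 b2 b3 g1 g2 g3 :: "'a::{finite,field}"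
  assumes "b1 * g2 - b2 * g1 \<noteq> 0"
  shows "card ({p. aff_fun (b1, b2, b3) p = 0} \<inter> {p. aff_fun (g1, g2, g3) p = 0}) \<le> 1"
proof (rule ccontr)
  assume "\<not> ?thesis"
  then obtain p p' where "p \<noteq> p'"
    "p \<in> {p. aff_fun (b1, b2, b3) p = 0} \<inter> {p. aff_fun (g1, g2, g3) p = 0}"
    "p' \<in> {p. aff_fun (b1, b2, b3) p = 0} \<inter> {p. aff_fun (g1, g2, g3) p = 0}"
    using two_distinct_elems[of "{p. aff_fun (b1, b2, b3) p = 0} \<inter> {p. aff_fun (g1, g2, g3) p = 0}"]
      by auto
  moreover have "(b1, b2) \<noteq> (0, 0)" "(g1, g2) \<noteq> (0, 0)" using assms by auto
  ultimately obtain k where "g1 = k * b1" "g2 = k * b2"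
    using aff_fun_proportional[where p=p and p'=p'] by blast
  with assms show False by (simp add: algebra_simps)
qed

section \<open>Moving a line disjoint from the curve to infinity\<close>

lemma sum_UNIV_vec3_by_last: "(\<Sum>w\<in>UNIV. h w) = (\<Sum>u\<in>UNIV. \<Sum>p\<in>UNIV. h (fst p, snd p, u))"
  for h :: "'a::finite vec3 \<Rightarrow> 'b::comm_monoid_add"
proof -
  have "(\<Sum>w\<in>UNIV. h w) = (\<Sum>s\<in>UNIV. \<Sum>u\<in>UNIV. \<Sum>t\<in>UNIV. h (s, t, u))"
    by (simp add: sum_UNIV_vec3) (intro sum.cong refl sum.swap)
  also have "\<dots> = (\<Sum>u\<in>UNIV. \<Sum>p\<in>UNIV. h (fst p, snd p, u))"
    by (subst sum.swap) (simp add: sum_UNIV_prod)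
  finally show ?thesis .
qed

lemma sum_UNIV_split_0: "(\<Sum>u\<in>UNIV. h u) = h 0 + (\<Sum>u\<in>UNIV - {0}. h (u :: 'a::{finite,zero}))"
  by (simp add: sum.remove)

text \<open>In the coordinates \<open>w\<close> with \<open>v = chart w\<close> the line \<open>l0\<close> is \<open>u = 0\<close>, and \<open>F_aff\<close> is
  the dehomogenisation of \<open>F\<close> with respect to it.\<close>

locale affine_chart =
  fixes F :: "'a::{finite,field} tpoly" and l0 A B C :: "'a vec3"
  assumes card_ge_7: "CARD('a) \<ge> 7"
    and card_curve_pts: "card (curve_pts (CARD('a) - 1) F) = (CARD('a) - 1)\<^sup>2"
    and line_in_Zset: "line_pts l0 \<subseteq> Zset (CARD('a) - 1) F"
    and frame: "dot3 l0 A = 0" "dot3 l0 B = 0" "dot3 l0 C = 1"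
    and frame_kernel: "\<And>w. lincomb3 A B C w = (0, 0, 0) \<Longrightarrow> w = (0, 0, 0)"
begin

definition chart :: "'a vec3 \<Rightarrow> 'a vec3" where
  "chart = lincomb3 A B C"

definition F_chart :: "'a vec3 \<Rightarrow> 'a" where
  "F_chart w = heval (CARD('a) - 1) F (chart w)"

definition F_aff :: "'a \<times> 'a \<Rightarrow> 'a" where
  "F_aff p = F_chart (fst p, snd p, 1)"

definition aff_point :: "'a \<times> 'a \<Rightarrow> 'a vec3 set" where
  "aff_point p = proj_class (chart (fst p, snd p, 1))"

lemma dot3_chart: "dot3 l (chart w) = dot3 (dual3 A B C l) w"
  by (simp add: chart_def dot3_lincomb3)

lemma dual3_l0: "dual3 A B C l0 = (0, 0, 1)"
  by (simp add: dual3_def frame)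

lemma dot3_l0_chart: "dot3 l0 (chart (s, t, u)) = u"
  by (simp add: dot3_chart dual3_l0)

lemma chart_scale3: "chart (scale3 c w) = scale3 c (chart w)"
  by (simp add: chart_def lincomb3_scale3)

lemma inj_chart: "inj chart"
  unfolding chart_def using frame_kernel by (rule inj_lincomb3)

lemma surj_chart: "surj chart"
  using inj_chart by (simp add: finite_UNIV_inj_surj)

lemma chart_eq_0_iff: "chart w = (0, 0, 0) \<longleftrightarrow> w = (0, 0, 0)"
proof
  assume "chart w = (0, 0, 0)"
  then show "w = (0, 0, 0)" using frame_kernel by (simp add: chart_def)
next
  assume "w = (0, 0, 0)"
  then show "chart w = (0, 0, 0)" unfolding chart_def
    by (cases A, cases B, cases C) (simp add: lincomb3_def)
qed

lemma F_chart_in_polyfun3: "F_chart \<in> polyfun3 (CARD('a) - 1)"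
proof -
  obtain a1 a2 a3 b1 b2 b3 c1 c2 c3
    where ABC: "A = (a1, a2, a3)" "B = (b1, b2, b3)" "C = (c1, c2, c3)"
    by (cases A, cases B, cases C)
  have "(\<lambda>w. heval (CARD('a) - 1) F (dot3 (a1, b1, c1) w, dot3 (a2, b2, c2) w, dot3 (a3, b3, c3) w))
          \<in> polyfun3 (CARD('a) - 1)"
    by (rule polyfun3_compose_linear[OF heval_in_polyfun3])
  moreover have "chart w = (dot3 (a1, b1, c1) w, dot3 (a2, b2, c2) w, dot3 (a3, b3, c3) w)" for w
    unfolding chart_def by (simp add: ABC lincomb3_eq)
  ultimately show ?thesis by (simp add: F_chart_def[abs_def])
qed

lemma F_chart_scale3: "F_chart (scale3 c w) = c ^ (CARD('a) - 1) * F_chart w"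
  by (simp add: F_chart_def chart_scale3 heval_scale3)

lemma F_chart_at_infinity: "(s, t) \<noteq> (0, 0) \<Longrightarrow> F_chart (s, t, 0) \<noteq> 0"
proof -
  assume "(s, t) \<noteq> (0, 0)"
  then have nz: "chart (s, t, 0) \<noteq> (0, 0, 0)" by (simp add: chart_eq_0_iff)
  then have "proj_class (chart (s, t, 0)) \<in> line_pts l0"
    by (simp add: proj_class_in_line_pts_iff dot3_l0_chart)
  then have "proj_class (chart (s, t, 0)) \<notin> curve_pts (CARD('a) - 1) F"
    using line_in_Zset by (auto simp: Zset_def)
  with nz show ?thesis by (simp add: proj_class_in_curve_pts_iff F_chart_def)
qed

text \<open>The form \<open>G = a\<^sup>i b\<^sup>j u\<^sup>e F_chart\<close> of degree \<open>2(q - 1)\<close> sums to zero over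
  \<open>F\<^sub>q\<^sup>3\<close> by Chevalley's lemma; its slice \<open>u = 0\<close> vanishes and, by homogeneity, each slice
  \<open>u \<noteq> 0\<close> equals the affine moment, which therefore appears \<open>q - 1\<close> times in a zero sum.\<close>

lemma moments_F_aff:
  assumes ij: "i + j \<le> CARD('a) - 2"
  shows "(\<Sum>p\<in>UNIV. F_aff p * aff_fun a p ^ i * aff_fun b p ^ j) = 0"
proof -
  let ?d = "CARD('a) - 1"
  let ?e = "?d - i - j"
  define G where "G w = dot3 a w ^ i * (dot3 b w ^ j * (dot3 (0, 0, 1) w ^ ?e * F_chart w))" for w
  define X where "X = (\<Sum>p\<in>UNIV. F_aff p * aff_fun a p ^ i * aff_fun b p ^ j)"
  have "G \<in> polyfun3 (?d + ?e + j + i)"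
    unfolding G_def by (intro polyfun3_dot3_power_mult F_chart_in_polyfun3)
  moreover have "?d + ?e + j + i < 3 * ?d" using ij card_ge_7 by linarith
  ultimately have "(\<Sum>w\<in>UNIV. G w) = 0" by (rule sum_polyfun3_eq_0)
  have "?e \<noteq> 0" using ij card_ge_7 by linarith
  then have slice0: "(\<Sum>p\<in>UNIV. G (fst p, snd p, 0)) = 0"
    by (intro sum.neutral) (simp add: G_def)
  have slice: "(\<Sum>p\<in>UNIV. G (fst p, snd p, u)) = X" if u: "u \<noteq> 0" for u
  proof -
    have "(\<Sum>p\<in>UNIV. G (fst p, snd p, u)) = (\<Sum>p\<in>UNIV. G (u * fst p, u * snd p, u))"
      using u
        by (intro sum.reindex_bij_witness[of _ "\<lambda>p. (u * fst p, u * snd p)"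
              "\<lambda>p. (fst p / u, snd p / u)"])
        auto
    also have "\<dots> = X" unfolding X_def
    proof (intro sum.cong refl)
      fix p :: "'a \<times> 'a"
      have ud: "u ^ ?d = 1" using power_card_UNIV_minus_1[OF u] .
      have "G (u * fst p, u * snd p, u) = G (scale3 u (fst p, snd p, 1))" by simp
      also have "\<dots> = u ^ (i + j + ?e) * (F_aff p * aff_fun a p ^ i * aff_fun b p ^ j)"
        unfolding G_def F_chart_scale3 dot3_scale3_right ud
        by (simp add: F_aff_def aff_fun_def power_mult_distrib power_add algebra_simps)
      also have "i + j + ?e = ?d" using ij card_ge_7 by linarith
      finally show "G (u * fst p, u * snd p, u) = F_aff p * aff_fun a p ^ i * aff_fun b p ^ j"
        by (simp only: ud mult_1_left)
    qed
    finally show ?thesis .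
  qed
  have "(\<Sum>w\<in>UNIV. G w)
          = (\<Sum>p\<in>UNIV. G (fst p, snd p, 0)) + (\<Sum>u\<in>UNIV - {0}. \<Sum>p\<in>UNIV. G (fst p, snd p, u))"
    by (simp add: sum_UNIV_vec3_by_last sum_UNIV_split_0)
  also have "\<dots> = - X" by (simp add: slice0 slice of_nat_card_UNIV_eq_0)
  finally show ?thesis using \<open>(\<Sum>w\<in>UNIV. G w) = 0\<close> by (simp add: X_def)
qed

text \<open>Restricting \<open>F_chart\<close> to a plane through the origin gives a form of degree \<open>q - 1\<close> in
  two variables, whose sum over \<open>F\<^sub>q\<^sup>2\<close> vanishes by Chevalley's lemma.\<close>

lemma sum_F_chart_plane: "(\<Sum>a\<in>UNIV. \<Sum>b\<in>UNIV. F_chart (a * d1 + b * s0, a * d2 + b * t0, b)) = 0"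
proof -
  let ?d = "CARD('a) - 1"
  define \<Psi> where "\<Psi> w = F_chart (dot3 (d1, s0, 0) w, dot3 (d2, t0, 0) w, dot3 (0, 1, 0) w)" for w
  have "(\<lambda>w. dot3 (0, 0, 1) w ^ ?d * \<Psi> w) \<in> polyfun3 (?d + ?d)"
    unfolding \<Psi>_def by (intro polyfun3_dot3_power_mult polyfun3_compose_linear F_chart_in_polyfun3)
  moreover have "?d + ?d < 3 * ?d" using card_ge_7 by linarith
  ultimately have "0 = (\<Sum>w\<in>UNIV. dot3 (0, 0, 1) w ^ ?d * \<Psi> w)" by (simp add: sum_polyfun3_eq_0)
  also have "\<dots> = (\<Sum>u\<in>UNIV. \<Sum>p\<in>UNIV. u ^ ?d * \<Psi> (fst p, snd p, 0))"
    by (simp add: sum_UNIV_vec3_by_last \<Psi>_def)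
  also have "\<dots> = (\<Sum>u\<in>UNIV. u ^ ?d) * (\<Sum>p\<in>UNIV. \<Psi> (fst p, snd p, 0))"
    by (simp add: sum_distrib_left[symmetric] sum_distrib_right[symmetric])
  also have "\<dots> = - (\<Sum>a\<in>UNIV. \<Sum>b\<in>UNIV. F_chart (a * d1 + b * s0, a * d2 + b * t0, b))"
    unfolding sum_UNIV_power_card_minus_1 by (simp add: sum_UNIV_prod \<Psi>_def mult.commute)
  finally show ?thesis by simp
qed

text \<open>Slicing the zero sum of \<open>sum_F_chart_plane\<close> by the last coordinate \<open>b\<close>: the slice \<open>b = 0\<close>
  gives \<open>-F_chart (d1, d2, 0)\<close>, the value at the point at infinity, and each slice \<open>b \<noteq> 0\<close>
  gives the line sum.\<close>

lemma line_sum_F_aff: "(\<Sum>t\<in>UNIV. F_aff (s0 + t * d1, t0 + t * d2)) = - F_chart (d1, d2, 0)"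
proof -
  let ?d = "CARD('a) - 1"
  let ?S = "\<Sum>t\<in>UNIV. F_aff (s0 + t * d1, t0 + t * d2)"
  have slice0: "(\<Sum>a\<in>UNIV. F_chart (a * d1 + 0 * s0, a * d2 + 0 * t0, 0)) = - F_chart (d1, d2, 0)"
  proof -
    have "(\<Sum>a\<in>UNIV. F_chart (a * d1 + 0 * s0, a * d2 + 0 * t0, 0))
            = (\<Sum>a\<in>UNIV. a ^ ?d * F_chart (d1, d2, 0))"
      using F_chart_scale3[of _ "(d1, d2, 0)"] by (simp add: mult.commute)
    also have "\<dots> = (\<Sum>a\<in>UNIV. a ^ ?d) * F_chart (d1, d2, 0)" by (rule sum_distrib_right[symmetric])
    finally show ?thesis unfolding sum_UNIV_power_card_minus_1 by simp
  qed
  have slice: "(\<Sum>a\<in>UNIV. F_chart (a * d1 + b * s0, a * d2 + b * t0, b)) = ?S" if b: "b \<noteq> 0" for b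
  proof -
    have "(\<Sum>a\<in>UNIV. F_chart (a * d1 + b * s0, a * d2 + b * t0, b))
            = (\<Sum>t\<in>UNIV. F_chart (scale3 b (s0 + t * d1, t0 + t * d2, 1)))"
      using b
        by (intro sum.reindex_bij_witness[of _ "\<lambda>t. b * t" "\<lambda>a. a / b"]) (auto simp: algebra_simps)
    also have "\<dots> = ?S"
      unfolding F_chart_scale3 power_card_UNIV_minus_1[OF b] F_aff_def by simp
    finally show ?thesis .
  qed
  have "(\<Sum>b\<in>UNIV - {0}. \<Sum>a\<in>UNIV. F_chart (a * d1 + b * s0, a * d2 + b * t0, b))
          = (\<Sum>b\<in>UNIV - {0::'a}. ?S)"
    by (rule sum.cong) (simp_all add: slice)
  then have rest: "(\<Sum>b\<in>UNIV - {0}. \<Sum>a\<in>UNIV. F_chart (a * d1 + b * s0, a * d2 + b * t0, b)) = - ?S"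
    by (simp only: sum_UNIV_minus_0_const)
  have "0 = (\<Sum>b\<in>UNIV. \<Sum>a\<in>UNIV. F_chart (a * d1 + b * s0, a * d2 + b * t0, b))"
    by (subst sum.swap) (rule sum_F_chart_plane[symmetric])
  also have "\<dots> = - F_chart (d1, d2, 0) - ?S"
    by (subst sum_UNIV_split_0) (simp only: slice0 rest diff_conv_add_uminus)
  finally show ?thesis by (simp add: eq_neg_iff_add_eq_0 algebra_simps)
qed

lemma line_sum_F_aff_nonzero:
  "(d1, d2) \<noteq> (0, 0) \<Longrightarrow> (\<Sum>t\<in>UNIV. F_aff (s0 + t * d1, t0 + t * d2)) \<noteq> 0"
  by (simp add: line_sum_F_aff F_chart_at_infinity)

lemma chart_aff_nonzero: "chart (s, t, 1) \<noteq> (0, 0, 0)"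
  by (simp add: chart_eq_0_iff)

lemma aff_point_in_line_pts_iff: "aff_point p \<in> line_pts m \<longleftrightarrow> aff_fun (dual3 A B C m) p = 0"
  by (simp add: aff_point_def proj_class_in_line_pts_iff chart_aff_nonzero dot3_chart aff_fun_def)

lemma aff_point_in_curve_pts_iff: "aff_point p \<in> curve_pts (CARD('a) - 1) F \<longleftrightarrow> F_aff p = 0"
  by (simp add: aff_point_def proj_class_in_curve_pts_iff chart_aff_nonzero F_aff_def F_chart_def)

lemma aff_point_notin_line_l0: "aff_point p \<notin> line_pts l0"
  by (simp add: aff_point_in_line_pts_iff dual3_l0 aff_fun_def)

lemma proj_pts_eq_aff_point:
  assumes "P \<in> proj_pts" "P \<notin> line_pts l0"
  obtains p where "P = aff_point p"
proof -
  obtain v where v: "v \<noteq> (0, 0, 0)" "P = proj_class v" using assms(1) by (rule proj_ptsE)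
  obtain s t u where w: "v = chart (s, t, u)" using surj_chart by (metis surj_def prod_cases3)
  have "u \<noteq> 0" using assms(2) v w by (auto simp: proj_class_in_line_pts_iff dot3_l0_chart)
  then have "v = scale3 u (chart (s / u, t / u, 1))" by (simp add: w flip: chart_scale3)
  with v \<open>u \<noteq> 0\<close> have "P = aff_point (s / u, t / u)"
    by (simp add: aff_point_def proj_class_scale3)
  then show ?thesis by (rule that)
qed

lemma inj_aff_point: "inj aff_point"
proof (rule injI)
  fix p p' :: "'a \<times> 'a"
  assume "aff_point p = aff_point p'"
  then have "chart (fst p', snd p', 1) \<in> proj_class (chart (fst p, snd p, 1))"
    using proj_class_self by (metis aff_point_def)
  then obtain c where "chart (fst p', snd p', 1) = scale3 c (chart (fst p, snd p, 1))"
    by (auto simp: proj_class_eq)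
  then have "chart (fst p', snd p', 1) = chart (scale3 c (fst p, snd p, 1))"
    by (simp only: chart_scale3)
  then have "(fst p', snd p', 1) = scale3 c (fst p, snd p, 1)" by (rule injD[OF inj_chart])
  then show "p = p'" by (simp add: prod_eq_iff)
qed

lemma curve_pts_eq_image: "curve_pts (CARD('a) - 1) F = aff_point ` {p. F_aff p = 0}"
proof (intro set_eqI iffI)
  fix P assume P: "P \<in> curve_pts (CARD('a) - 1) F"
  then have "P \<in> proj_pts" "P \<notin> line_pts l0"
    using line_in_Zset by (auto simp: curve_pts_def Zset_def)
  then obtain p where "P = aff_point p" by (rule proj_pts_eq_aff_point)
  with P show "P \<in> aff_point ` {p. F_aff p = 0}" using aff_point_in_curve_pts_iff by blast
qed (use aff_point_in_curve_pts_iff in blast)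

lemma card_support_F_aff: "card {p. F_aff p \<noteq> 0} = 2 * CARD('a) - 1"
proof -
  have "card {p. F_aff p = 0} = (CARD('a) - 1)\<^sup>2"
    using card_curve_pts unfolding curve_pts_eq_image
    by (simp add: card_image inj_on_subset[OF inj_aff_point])
  moreover have "{p. F_aff p \<noteq> 0} = UNIV - {p. F_aff p = 0}" by auto
  ultimately have "card {p. F_aff p \<noteq> 0} = CARD('a) * CARD('a) - (CARD('a) - 1) * (CARD('a) - 1)"
    by (simp add: card_Diff_subset power2_eq_square)
  moreover obtain r where "CARD('a) = r + 1"
    using card_ge_7 by (metis add.commute le_add_diff_inverse2 le_trans one_le_numeral)
  ultimately show ?thesis by (simp add: algebra_simps)
qed

lemma plane_weight_F_aff: "plane_weight F_aff"
  by unfold_locales (use moments_F_aff line_sum_F_aff_nonzero card_support_F_aff card_ge_7 in auto)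

end

context affine_chart
begin

lemma inj_dual3: "inj (dual3 A B C)"
proof (rule injI)
  fix m m' :: "'a vec3"
  assume eq: "dual3 A B C m = dual3 A B C m'"
  have "dot3 m v = dot3 m' v" for v
  proof -
    obtain w where "v = chart w" using surj_chart by (metis surj_def)
    with eq show ?thesis by (simp add: dot3_chart)
  qed
  from this[of "(1, 0, 0)"] this[of "(0, 1, 0)"] this[of "(0, 0, 1)"] show "m = m'"
    by (cases m, cases m') simp
qed

lemma surj_dual3: "surj (dual3 A B C)"
  using inj_dual3 by (simp add: finite_UNIV_inj_surj)

lemma line_pts_disjoint_curve_iff:
  "line_pts m \<inter> curve_pts (CARD('a) - 1) F = {} \<longleftrightarrow> (\<forall>p. aff_fun (dual3 A B C m) p = 0 \<longrightarrow> F_aff p \<noteq> 0)"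
proof
  assume "line_pts m \<inter> curve_pts (CARD('a) - 1) F = {}"
  then show "\<forall>p. aff_fun (dual3 A B C m) p = 0 \<longrightarrow> F_aff p \<noteq> 0"
    using aff_point_in_line_pts_iff aff_point_in_curve_pts_iff by blast
next
  assume avoid: "\<forall>p. aff_fun (dual3 A B C m) p = 0 \<longrightarrow> F_aff p \<noteq> 0"
  show "line_pts m \<inter> curve_pts (CARD('a) - 1) F = {}"
  proof (rule ccontr)
    assume "\<not> ?thesis"
    then obtain P where P: "P \<in> line_pts m" "P \<in> curve_pts (CARD('a) - 1) F" by blast
    then have "P \<in> proj_pts" "P \<notin> line_pts l0"
      using line_in_Zset line_pts_subset[of m] by (auto simp: Zset_def)
    then obtain p where "P = aff_point p" by (rule proj_pts_eq_aff_point)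
    with P avoid show False using aff_point_in_line_pts_iff aff_point_in_curve_pts_iff by blast
  qed
qed

lemma line_pts_eq_if_two_common_zeros:
  assumes x: "dual3 A B C m = (x1, x2, x3)" "(x1, x2) \<noteq> (0, 0)"
    and y: "dual3 A B C m' = (y1, y2, y3)" "(y1, y2) \<noteq> (0, 0)"
    and two: "card ({p. aff_fun (x1, x2, x3) p = 0} \<inter> {p. aff_fun (y1, y2, y3) p = 0}) \<ge> 2"
  shows "line_pts m' = line_pts m"
proof -
  obtain p p' where "p \<noteq> p'"
    "p \<in> {p. aff_fun (x1, x2, x3) p = 0} \<inter> {p. aff_fun (y1, y2, y3) p = 0}"
    "p' \<in> {p. aff_fun (x1, x2, x3) p = 0} \<inter> {p. aff_fun (y1, y2, y3) p = 0}"
    using two_distinct_elems[OF _ two] by auto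
  then obtain k where k: "k \<noteq> 0" "y1 = k * x1" "y2 = k * x2" "y3 = k * x3"
    using aff_fun_proportional[OF x(2) y(2), where p=p and p'=p'] by auto
  then have "dual3 A B C m' = dual3 A B C (scale3 k m)" using x y by (simp add: dual3_scale3)
  then have "m' = scale3 k m" by (rule injD[OF inj_dual3])
  then show ?thesis using line_pts_scale3[OF k(1)] by simp
qed

context
  fixes b1 b2 b3 g1 g2 g3 :: 'a and m1 m2 :: "'a vec3"
  assumes m1: "dual3 A B C m1 = (b1, b2, b3)" and m2: "dual3 A B C m2 = (g1, g2, g3)"
    and nonparallel: "b1 * g2 - b2 * g1 \<noteq> 0"
    and support: "\<And>p. F_aff p \<noteq> 0 \<longleftrightarrow> aff_fun (b1, b2, b3) p = 0 \<or> aff_fun (g1, g2, g3) p = 0"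
begin

lemma lines_avoiding_curve_subset:
  assumes "m \<noteq> (0, 0, 0)" "line_pts m \<inter> curve_pts (CARD('a) - 1) F = {}"
  shows "line_pts m \<in> {line_pts l0, line_pts m1, line_pts m2}"
proof -
  obtain x1 x2 x3 where x: "dual3 A B C m = (x1, x2, x3)" by (cases "dual3 A B C m")
  have avoid: "aff_fun (x1, x2, x3) p = 0 \<Longrightarrow> F_aff p \<noteq> 0" for p
    using assms(2) unfolding line_pts_disjoint_curve_iff x by blast
  show ?thesis
  proof (cases "(x1, x2) = (0, 0)")
    case True
    have "x3 \<noteq> 0"
    proof
      assume "x3 = 0"
      with x True have "dual3 A B C m = dual3 A B C (0, 0, 0)" by (simp add: dual3_zero)
      with assms(1) show False using injD[OF inj_dual3] by blast
    qed
    have "dot3 m v = 0 \<longleftrightarrow> dot3 l0 v = 0" for v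
    proof -
      obtain s t u where "v = chart (s, t, u)" using surj_chart by (metis surj_def prod_cases3)
      with x True \<open>x3 \<noteq> 0\<close> show ?thesis by (simp add: dot3_chart dual3_l0)
    qed
    then have "line_pts m = line_pts l0" by (rule line_pts_eqI)
    then show ?thesis by simp
  next
    case False
    let ?Z = "{p. aff_fun (x1, x2, x3) p = 0}"
    let ?B = "{p. aff_fun (b1, b2, b3) p = 0}" and ?G = "{p. aff_fun (g1, g2, g3) p = 0}"
    have "?Z \<subseteq> (?Z \<inter> ?B) \<union> (?Z \<inter> ?G)" using avoid support by blast
    then have "card ?Z \<le> card (?Z \<inter> ?B) + card (?Z \<inter> ?G)"
      using card_mono[of "(?Z \<inter> ?B) \<union> (?Z \<inter> ?G)" ?Z] card_Un_le[of "?Z \<inter> ?B" "?Z \<inter> ?G"] by simp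
    moreover have "card ?Z = CARD('a)" using False by (rule card_aff_fun_zeros)
    ultimately have "card (?Z \<inter> ?B) \<ge> 2 \<or> card (?Z \<inter> ?G) \<ge> 2" using card_ge_7 by linarith
    moreover have "(b1, b2) \<noteq> (0, 0)" "(g1, g2) \<noteq> (0, 0)" using nonparallel by auto
    ultimately have "line_pts m1 = line_pts m \<or> line_pts m2 = line_pts m"
      using line_pts_eq_if_two_common_zeros[OF x False] m1 m2 by blast
    then show ?thesis by auto
  qed
qed

lemma lines_avoiding_curve_distinct:
  "line_pts l0 \<noteq> line_pts m1" "line_pts l0 \<noteq> line_pts m2" "line_pts m1 \<noteq> line_pts m2"
proof -
  let ?B = "{p. aff_fun (b1, b2, b3) p = 0}" and ?G = "{p. aff_fun (g1, g2, g3) p = 0}"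
  have b: "(b1, b2) \<noteq> (0, 0)" and g: "(g1, g2) \<noteq> (0, 0)" using nonparallel by auto
  have "card (?B - ?G) \<ge> CARD('a) - 1"
    using card_aff_fun_zeros[OF b, of b3] card_common_zeros_le_1[OF nonparallel, of b3 g3]
      card_Un_le[of "?B - ?G" "?B \<inter> ?G"] by (simp add: Un_Diff_Int)
  then have "0 < card (?B - ?G)" using card_ge_7 by linarith
  then obtain p where p: "aff_fun (b1, b2, b3) p = 0" "aff_fun (g1, g2, g3) p \<noteq> 0"
    using card_gt_0_iff[of "?B - ?G"] by blast
  have "0 < card ?G" using card_aff_fun_zeros[OF g, of g3] card_ge_7 by linarith
  then obtain p' where p': "aff_fun (g1, g2, g3) p' = 0" using card_gt_0_iff[of ?G] by blast
  have "aff_point p \<in> line_pts m1" "aff_point p \<notin> line_pts m2" "aff_point p' \<in> line_pts m2"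
    using p p' m1 m2 by (simp_all add: aff_point_in_line_pts_iff)
  then show "line_pts l0 \<noteq> line_pts m1" "line_pts l0 \<noteq> line_pts m2" "line_pts m1 \<noteq> line_pts m2"
    using aff_point_notin_line_l0[of p] aff_point_notin_line_l0[of p'] by blast+
qed

lemma lines_avoiding_curve_eq:
  "{L \<in> fq_lines. L \<inter> curve_pts (CARD('a) - 1) F = {}} = {line_pts l0, line_pts m1, line_pts m2}"
proof
  show "{L \<in> fq_lines. L \<inter> curve_pts (CARD('a) - 1) F = {}}
          \<subseteq> {line_pts l0, line_pts m1, line_pts m2}"
    using lines_avoiding_curve_subset unfolding fq_lines_def by blast
next
  have "m1 \<noteq> (0, 0, 0)"
  proof
    assume "m1 = (0, 0, 0)"
    then have "b1 = 0 \<and> b2 = 0" using m1 dual3_zero[of A B C] by simp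
    with nonparallel show False by simp
  qed
  moreover have "m2 \<noteq> (0, 0, 0)"
  proof
    assume "m2 = (0, 0, 0)"
    then have "g1 = 0 \<and> g2 = 0" using m2 dual3_zero[of A B C] by simp
    with nonparallel show False by simp
  qed
  moreover have "l0 \<noteq> (0, 0, 0)" using frame(3) by (cases C) auto
  ultimately have nonzero: "l0 \<noteq> (0, 0, 0)" "m1 \<noteq> (0, 0, 0)" "m2 \<noteq> (0, 0, 0)" by blast+
  have "line_pts l0 \<inter> curve_pts (CARD('a) - 1) F = {}" using line_in_Zset by (auto simp: Zset_def)
  moreover have "line_pts m1 \<inter> curve_pts (CARD('a) - 1) F = {}"
    "line_pts m2 \<inter> curve_pts (CARD('a) - 1) F = {}"
    unfolding line_pts_disjoint_curve_iff m1 m2 using support by blast+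
  ultimately show "{line_pts l0, line_pts m1, line_pts m2}
                    \<subseteq> {L \<in> fq_lines. L \<inter> curve_pts (CARD('a) - 1) F = {}}"
    using nonzero unfolding fq_lines_def by blast
qed

end

theorem a0_eq_3: "a0 (CARD('a) - 1) F = 3"
proof -
  interpret W: plane_weight F_aff by (rule plane_weight_F_aff)
  obtain b1 b2 b3 g1 g2 g3 where nonparallel: "b1 * g2 - b2 * g1 \<noteq> 0"
    and support: "\<forall>p. F_aff p \<noteq> 0 \<longleftrightarrow> aff_fun (b1, b2, b3) p = 0 \<or> aff_fun (g1, g2, g3) p = 0"
    using W.support_two_lines by blast
  obtain m1 where m1: "dual3 A B C m1 = (b1, b2, b3)" using surj_dual3 by (metis surj_def)
  obtain m2 where m2: "dual3 A B C m2 = (g1, g2, g3)" using surj_dual3 by (metis surj_def)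
  show ?thesis
    using lines_avoiding_curve_eq[OF m1 m2 nonparallel support[rule_format]]
      lines_avoiding_curve_distinct[OF m1 m2 nonparallel support[rule_format]]
    by (simp add: a0_def)
qed

end

theorem corollary3p12:
  fixes F :: "('a::{finite,field}) tpoly"
  assumes "card (UNIV :: 'a set) \<ge> 7"
    and "homog (card (UNIV :: 'a set) - 1) F"
    and "no_linear_component (card (UNIV :: 'a set) - 1) F"
    and "card (curve_pts (card (UNIV :: 'a set) - 1) F) = (card (UNIV :: 'a set) - 1)^2"
    and "\<exists>L\<in>fq_lines. L \<subseteq> Zset (card (UNIV :: 'a set) - 1) F"
  shows "a0 (card (UNIV :: 'a set) - 1) F = 3"
proof -
  obtain l0 :: "'a vec3" where "l0 \<noteq> (0, 0, 0)" "line_pts l0 \<subseteq> Zset (CARD('a) - 1) F"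
    using assms(5) by (auto simp: fq_lines_def)
  moreover obtain A B C where "dot3 l0 A = 0" "dot3 l0 B = 0" "dot3 l0 C = 1"
    "\<forall>w. lincomb3 A B C w = (0, 0, 0) \<longrightarrow> w = (0, 0, 0)"
    using exists_frame_for_line[OF \<open>l0 \<noteq> (0, 0, 0)\<close>] by blast
  ultimately interpret affine_chart F l0 A B C
    using assms(1,4) by unfold_locales auto
  show ?thesis by (rule a0_eq_3)
qed

end
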